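(* For each $\Lambda\in\{\mathsf{CS4},\mathsf{GS4},\mathsf{S4I}\}$ and every formula $\varphi$: $\Lambda\vdash\varphi$ if and only if $\mathcal M\models\varphi$ for every $\Lambda$-model $\mathcal M$.
   Context: Fix a countably infinite set $\mathbb P$ of propositional variables. Formulas: $\varphi,\psi ::= p\mid\bot\mid(\varphi\wedge\psi)\mid(\varphi\vee\psi)\mid(\varphi\to\psi)\mid\Diamond\varphi\mid\Box\varphi$; $\neg\varphi:=\varphi\to\bot$. A bi-intuitionistic frame is $(W,W_\bot,\preccurlyeq,\sqsubseteq)$ with $\preccurlyeq,\sqsubseteq$ preorders on $W$ and $W_\bot\subseteq W$ upward closed under both; infallible if $W_\bot=\varnothing$. A valuation $V:\mathbb P\to 2^W$ has each $V(p)$ upward closed under $\preccurlyeq$ and containing $W_\bot$; a model is $\mathcal M=(W,W_\bot,\preccurlyeq,\sqsubseteq,V)$. Satisfaction: $p$ iff $w\in V(p)$; $\bot$ iff $w\in W_\bot$; $\wedge,\vee$ pointwise; $w\models\varphi\to\psi$ iff for all $v\succcurlyeq w$, $v\models\varphi$ implies $v\models\psi$; $w\models\Diamond\varphi$ iff for all $u\succcurlyeq w$ there is $v\sqsupseteq u$ with $v\models\varphi$; $w\models\Box\varphi$ iff $v\models\varphi$ whenever $w\preccurlyeq u\sqsubseteq v$. $\mathcal M\models\varphi$ iff $\varphi$ holds at every $w\in W\setminus W_\bot$. $\sqsubseteq$ is forward confluent if $w\preccurlyeq w'$, $w\sqsubseteq v$ imply some $v'$ with $v\preccurlyeq v'$,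 $w'\sqsubseteq v'$; backward confluent if $w\sqsubseteq v\preccurlyeq v'$ implies some $w'$ with $w\preccurlyeq w'\sqsubseteq v'$; downward confluent if $w\preccurlyeq v\sqsubseteq v'$ implies some $w'$ with $w\sqsubseteq w'\preccurlyeq v'$. Locally linear: $w\preccurlyeq u$, $w\preccurlyeq v$ imply $u\preccurlyeq v$ or $v\preccurlyeq u$. $\mathsf{CS4}$-frames: backward confluent bi-intuitionistic frames. $\mathsf{GS4}$-frames: infallible, locally linear, forward and backward confluent. $\mathsf{S4I}$-frames: infallible, forward and downward confluent. A $\Lambda$-model is a model on a $\Lambda$-frame. $\mathsf{CS4}$ is the least set of formulas containing all intuitionistic propositional tautologies and all instances of $\Box(\varphi\to\psi)\to(\Box\varphi\to\Box\psi)$, $\Box(\varphi\to\psi)\to(\Diamond\varphi\to\Diamond\psi)$, $\Box\varphi\to\varphi$, $\varphi\to\Diamond\varphi$, $\Box\varphi\to\Box\Box\varphi$, $\Diamond\Diamond\varphi\to\Diamond\varphi$, closed under modus ponens and necessitation. Axioms: (FS) $(\Diamond\varphi\to\Box\psi)\to\Box(\varphi\to\psi)$; (DP) $\Diamond(\varphi\vee\psi)\to\Diamond\varphi\vee\Diamond\psi$; (N) $\neg\Diamond\bot$; (CD) $\Box(\varphi\vee\psi)\to\Box\varphi\vee\Diamond\psi$; (GD) $(\varphi\to\psi)\vee(\psi\to\varphi)$. $\mathsf{GS4}=\mathsf{CS4}+\mathrm{FS}+\mathrm{DP}+\mathrm N+\mathrm{GD}$ and $\mathsf{S4I}=\mathsf{CS4}+\mathrm{DP}+\mathrm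 N+\mathrm{CD}$ (adding all instances, closed under the same rules). *)

theory Defs
  imports Main
begin

datatype form =
    Var nat
  | Bot
  | And form form
  | Or form form
  | Imp form form
  | Dia form
  | Box form

definition Neg :: "form \<Rightarrow> form" where
  "Neg \<phi> = Imp \<phi> Bot"

datatype logic = CS4 | GS4 | S4I

text \<open>Intuitionistic propositional tautologies (in the modal language) are given by
the standard complete Hilbert axiomatisation of IPC, instantiated with arbitrary
modal formulas; since the logics are closed under modus ponens this yields exactly
all substitution instances of intuitionistic propositional tautologies.\<close>

inductive ipc_axiom :: "form \<Rightarrow> bool" where
  ipcK:    "ipc_axiom (Imp \<phi> (Imp \<psi> \<phi>))"
| ipcS:    "ipc_axiom (Imp (Imp \<phi> (Imp \<psi> \<chi>)) (Imp (Imp \<phi> \<psi>) (Imp \<phi> \<chi>)))"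
| ipcC1:   "ipc_axiom (Imp (And \<phi> \<psi>) \<phi>)"
| ipcC2:   "ipc_axiom (Imp (And \<phi> \<psi>) \<psi>)"
| ipcCI:   "ipc_axiom (Imp \<phi> (Imp \<psi> (And \<phi> \<psi>)))"
| ipcD1:   "ipc_axiom (Imp \<phi> (Or \<phi> \<psi>))"
| ipcD2:   "ipc_axiom (Imp \<psi> (Or \<phi> \<psi>))"
| ipcDE:   "ipc_axiom (Imp (Imp \<phi> \<chi>) (Imp (Imp \<psi> \<chi>) (Imp (Or \<phi> \<psi>) \<chi>)))"
| ipcEFQ:  "ipc_axiom (Imp Bot \<phi>)"

inductive cs4_axiom :: "form \<Rightarrow> bool" where
  axK:   "cs4_axiom (Imp (Box (Imp \<phi> \<psi>)) (Imp (Box \<phi>) (Box \<psi>)))"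
| axKd:  "cs4_axiom (Imp (Box (Imp \<phi> \<psi>)) (Imp (Dia \<phi>) (Dia \<psi>)))"
| axT:   "cs4_axiom (Imp (Box \<phi>) \<phi>)"
| axTd:  "cs4_axiom (Imp \<phi> (Dia \<phi>))"
| ax4:   "cs4_axiom (Imp (Box \<phi>) (Box (Box \<phi>)))"
| ax4d:  "cs4_axiom (Imp (Dia (Dia \<phi>)) (Dia \<phi>))"

definition FS_ax :: "form \<Rightarrow> bool" where
  "FS_ax \<chi> \<longleftrightarrow> (\<exists>\<phi> \<psi>. \<chi> = Imp (Imp (Dia \<phi>) (Box \<psi>)) (Box (Imp \<phi> \<psi>)))"

definition DP_ax :: "form \<Rightarrow> bool" where
  "DP_ax \<chi> \<longleftrightarrow> (\<exists>\<phi> \<psi>. \<chi> = Imp (Dia (Or \<phi> \<psi>)) (Or (Dia \<phi>) (Dia \<psi>)))"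

definition N_ax :: "form \<Rightarrow> bool" where
  "N_ax \<chi> \<longleftrightarrow> \<chi> = Neg (Dia Bot)"

definition CD_ax :: "form \<Rightarrow> bool" where
  "CD_ax \<chi> \<longleftrightarrow> (\<exists>\<phi> \<psi>. \<chi> = Imp (Box (Or \<phi> \<psi>)) (Or (Box \<phi>) (Dia \<psi>)))"

definition GD_ax :: "form \<Rightarrow> bool" where
  "GD_ax \<chi> \<longleftrightarrow> (\<exists>\<phi> \<psi>. \<chi> = Or (Imp \<phi> \<psi>) (Imp \<psi> \<phi>))"

fun extra_axiom :: "logic \<Rightarrow> form \<Rightarrow> bool" where
  "extra_axiom CS4 \<chi> = False"
| "extra_axiom GS4 \<chi> = (FS_ax \<chi> \<or> DP_ax \<chi> \<or> N_ax \<chi> \<or> GD_ax \<chi>)"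
| "extra_axiom S4I \<chi> = (DP_ax \<chi> \<or> N_ax \<chi> \<or> CD_ax \<chi>)"

inductive prov :: "logic \<Rightarrow> form \<Rightarrow> bool" for L :: logic where
  ipc:   "ipc_axiom \<phi> \<Longrightarrow> prov L \<phi>"
| cs4:   "cs4_axiom \<phi> \<Longrightarrow> prov L \<phi>"
| extra: "extra_axiom L \<phi> \<Longrightarrow> prov L \<phi>"
| mp:    "prov L (Imp \<phi> \<psi>) \<Longrightarrow> prov L \<phi> \<Longrightarrow> prov L \<psi>"
| nec:   "prov L \<phi> \<Longrightarrow> prov L (Box \<phi>)"

text \<open>A model is given by its carrier W, the fallible worlds Wb, the intuitionistic
preorder R (\<preccurlyeq>), the modal preorder S (\<sqsubseteq>) and a valuation V.
Relations are only considered on W.\<close>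

definition preorder_on :: "'w set \<Rightarrow> ('w \<Rightarrow> 'w \<Rightarrow> bool) \<Rightarrow> bool" where
  "preorder_on W R \<longleftrightarrow> (\<forall>x\<in>W. R x x) \<and>
     (\<forall>x\<in>W. \<forall>y\<in>W. \<forall>z\<in>W. R x y \<longrightarrow> R y z \<longrightarrow> R x z)"

definition up_closed :: "'w set \<Rightarrow> ('w \<Rightarrow> 'w \<Rightarrow> bool) \<Rightarrow> 'w set \<Rightarrow> bool" where
  "up_closed W R A \<longleftrightarrow> (\<forall>x\<in>A. \<forall>y\<in>W. R x y \<longrightarrow> y \<in> A)"

definition bi_frame ::
  "'w set \<Rightarrow> 'w set \<Rightarrow> ('w \<Rightarrow> 'w \<Rightarrow> bool) \<Rightarrow> ('w \<Rightarrow> 'w \<Rightarrow> bool) \<Rightarrow> bool" where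
  "bi_frame W Wb R S \<longleftrightarrow> preorder_on W R \<and> preorder_on W S \<and> Wb \<subseteq> W \<and>
     up_closed W R Wb \<and> up_closed W S Wb"

definition valuation ::
  "'w set \<Rightarrow> 'w set \<Rightarrow> ('w \<Rightarrow> 'w \<Rightarrow> bool) \<Rightarrow> (nat \<Rightarrow> 'w set) \<Rightarrow> bool" where
  "valuation W Wb R V \<longleftrightarrow> (\<forall>p. V p \<subseteq> W \<and> up_closed W R (V p) \<and> Wb \<subseteq> V p)"

primrec sat ::
  "'w set \<Rightarrow> 'w set \<Rightarrow> ('w \<Rightarrow> 'w \<Rightarrow> bool) \<Rightarrow> ('w \<Rightarrow> 'w \<Rightarrow> bool) \<Rightarrow> (nat \<Rightarrow> 'w set)
    \<Rightarrow> 'w \<Rightarrow> form \<Rightarrow> bool" where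
  "sat W Wb R S V w (Var p) = (w \<in> V p)"
| "sat W Wb R S V w Bot = (w \<in> Wb)"
| "sat W Wb R S V w (And \<phi> \<psi>) = (sat W Wb R S V w \<phi> \<and> sat W Wb R S V w \<psi>)"
| "sat W Wb R S V w (Or \<phi> \<psi>) = (sat W Wb R S V w \<phi> \<or> sat W Wb R S V w \<psi>)"
| "sat W Wb R S V w (Imp \<phi> \<psi>) =
     (\<forall>v\<in>W. R w v \<longrightarrow> sat W Wb R S V v \<phi> \<longrightarrow> sat W Wb R S V v \<psi>)"
| "sat W Wb R S V w (Dia \<phi>) =
     (\<forall>u\<in>W. R w u \<longrightarrow> (\<exists>v\<in>W. S u v \<and> sat W Wb R S V v \<phi>))"
| "sat W Wb R S V w (Box \<phi>) =
     (\<forall>u\<in>W. \<forall>v\<in>W. R w u \<longrightarrow> S u v \<longrightarrow> sat W Wb R S V v \<phi>)"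

definition model_valid ::
  "'w set \<Rightarrow> 'w set \<Rightarrow> ('w \<Rightarrow> 'w \<Rightarrow> bool) \<Rightarrow> ('w \<Rightarrow> 'w \<Rightarrow> bool) \<Rightarrow> (nat \<Rightarrow> 'w set)
    \<Rightarrow> form \<Rightarrow> bool" where
  "model_valid W Wb R S V \<phi> \<longleftrightarrow> (\<forall>w\<in>W - Wb. sat W Wb R S V w \<phi>)"

definition forward_confluent :: "'w set \<Rightarrow> ('w \<Rightarrow> 'w \<Rightarrow> bool) \<Rightarrow> ('w \<Rightarrow> 'w \<Rightarrow> bool) \<Rightarrow> bool" where
  "forward_confluent W R S \<longleftrightarrow> (\<forall>w\<in>W. \<forall>w'\<in>W. \<forall>v\<in>W. R w w' \<longrightarrow> S w v \<longrightarrow>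
      (\<exists>v'\<in>W. R v v' \<and> S w' v'))"

definition backward_confluent :: "'w set \<Rightarrow> ('w \<Rightarrow> 'w \<Rightarrow> bool) \<Rightarrow> ('w \<Rightarrow> 'w \<Rightarrow> bool) \<Rightarrow> bool" where
  "backward_confluent W R S \<longleftrightarrow> (\<forall>w\<in>W. \<forall>v\<in>W. \<forall>v'\<in>W. S w v \<longrightarrow> R v v' \<longrightarrow>
      (\<exists>w'\<in>W. R w w' \<and> S w' v'))"

definition downward_confluent :: "'w set \<Rightarrow> ('w \<Rightarrow> 'w \<Rightarrow> bool) \<Rightarrow> ('w \<Rightarrow> 'w \<Rightarrow> bool) \<Rightarrow> bool" where
  "downward_confluent W R S \<longleftrightarrow> (\<forall>w\<in>W. \<forall>v\<in>W. \<forall>v'\<in>W. R w v \<longrightarrow> S v v' \<longrightarrow>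
      (\<exists>w'\<in>W. S w w' \<and> R w' v'))"

definition locally_linear :: "'w set \<Rightarrow> ('w \<Rightarrow> 'w \<Rightarrow> bool) \<Rightarrow> bool" where
  "locally_linear W R \<longleftrightarrow> (\<forall>w\<in>W. \<forall>u\<in>W. \<forall>v\<in>W. R w u \<longrightarrow> R w v \<longrightarrow> R u v \<or> R v u)"

fun logic_frame ::
  "logic \<Rightarrow> 'w set \<Rightarrow> 'w set \<Rightarrow> ('w \<Rightarrow> 'w \<Rightarrow> bool) \<Rightarrow> ('w \<Rightarrow> 'w \<Rightarrow> bool) \<Rightarrow> bool" where
  "logic_frame CS4 W Wb R S = (bi_frame W Wb R S \<and> backward_confluent W R S)"
| "logic_frame GS4 W Wb R S = (bi_frame W Wb R S \<and> Wb = {} \<and> locally_linear W R \<and>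
      forward_confluent W R S \<and> backward_confluent W R S)"
| "logic_frame S4I W Wb R S = (bi_frame W Wb R S \<and> Wb = {} \<and>
      forward_confluent W R S \<and> downward_confluent W R S)"

definition valid_in :: "'w itself \<Rightarrow> logic \<Rightarrow> form \<Rightarrow> bool" where
  "valid_in (T :: 'w itself) L \<phi> \<longleftrightarrow>
     (\<forall>(W :: 'w set) Wb R S V. logic_frame L W Wb R S \<longrightarrow> valuation W Wb R V \<longrightarrow>
        model_valid W Wb R S V \<phi>)"

end

theory Submission
  imports Defs
begin

(*
  Soundness is checked axiom by axiom, each extra axiom against its frame condition: FS needs
  forward and backward confluence, DP forward confluence, N infallibility, CD forward and
  downward confluence, GD local linearity; axiom 4 holds under backward or downward confluence.

  Completeness goes through canonical models whose worlds carry prime theories, ordered by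
  inclusion. A generic truth lemma needs only witnesses refuting a missing \<box>- or \<diamond>-formula.
  For CS4 a world is a prime theory together with an optional formula \<theta> whose diamond is
  promised to fail at all modal successors; this replaces DP in refuting \<diamond>\<theta>.
  For GS4 and S4I the worlds are the consistent prime theories, with \<Gamma> \<sqsubseteq> \<Delta> iff
  \<box>\<^sup>-\<Gamma> \<subseteq> \<Delta> \<subseteq> \<diamond>\<^sup>-\<Gamma>; DP and N give the \<diamond>-witnesses and forward confluence, FS gives the
  backward-confluence witnesses of GS4 and GD its local linearity, and CD gives the
  downward-confluence witnesses of S4I. The worlds are coded injectively as sets of sets of
  formulas, so the countermodels live on the type required by the statement.
*)

inductive derivable :: "logic \<Rightarrow> form set \<Rightarrow> form \<Rightarrow> bool" for L where
  derivable_prov: "prov L \<phi> \<Longrightarrow> derivable L \<Gamma> \<phi>"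
| derivable_assm: "\<phi> \<in> \<Gamma> \<Longrightarrow> derivable L \<Gamma> \<phi>"
| derivable_mp: "derivable L \<Gamma> (Imp \<phi> \<psi>) \<Longrightarrow> derivable L \<Gamma> \<phi> \<Longrightarrow> derivable L \<Gamma> \<psi>"

lemmas prov_K = ipc_axiom.ipcK[THEN prov.ipc]
lemmas prov_S = ipc_axiom.ipcS[THEN prov.ipc]
lemmas prov_And_left = ipc_axiom.ipcC1[THEN prov.ipc]
lemmas prov_And_right = ipc_axiom.ipcC2[THEN prov.ipc]
lemmas prov_And_intro = ipc_axiom.ipcCI[THEN prov.ipc]
lemmas prov_Or_left = ipc_axiom.ipcD1[THEN prov.ipc]
lemmas prov_Or_right = ipc_axiom.ipcD2[THEN prov.ipc]
lemmas prov_Or_elim = ipc_axiom.ipcDE[THEN prov.ipc]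
lemmas prov_Bot_elim = ipc_axiom.ipcEFQ[THEN prov.ipc]
lemmas prov_Box_K = cs4_axiom.axK[THEN prov.cs4]
lemmas prov_Dia_K = cs4_axiom.axKd[THEN prov.cs4]
lemmas prov_Box_T = cs4_axiom.axT[THEN prov.cs4]
lemmas prov_Dia_T = cs4_axiom.axTd[THEN prov.cs4]
lemmas prov_Box_4 = cs4_axiom.ax4[THEN prov.cs4]
lemmas prov_Dia_4 = cs4_axiom.ax4d[THEN prov.cs4]

lemma prov_DP: "L \<noteq> CS4 \<Longrightarrow> prov L (Imp (Dia (Or a b)) (Or (Dia a) (Dia b)))"
  by (cases L) (auto intro!: prov.extra simp: DP_ax_def)

lemma prov_N: "L \<noteq> CS4 \<Longrightarrow> prov L (Imp (Dia Bot) Bot)"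
  by (cases L) (auto intro!: prov.extra simp: N_ax_def Neg_def)

lemma prov_FS: "prov GS4 (Imp (Imp (Dia a) (Box b)) (Box (Imp a b)))"
  by (auto intro!: prov.extra simp: FS_ax_def)

lemma prov_GD: "prov GS4 (Or (Imp a b) (Imp b a))"
  by (auto intro!: prov.extra simp: GD_ax_def)

lemma prov_CD: "prov S4I (Imp (Box (Or a b)) (Or (Box a) (Dia b)))"
  by (auto intro!: prov.extra simp: CD_ax_def)

lemma prov_Imp_refl: "prov L (Imp a a)"
  by (meson prov_K prov_S prov.mp)

lemma derivable_empty_iff: "derivable L {} \<phi> \<longleftrightarrow> prov L \<phi>"
proof
  show "derivable L {} \<phi> \<Longrightarrow> prov L \<phi>"
    by (induction "{} :: form set" \<phi> rule: derivable.induct) (auto intro: prov.mp)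
qed (rule derivable_prov)

lemma derivable_trans:
  "derivable L \<Delta> \<phi> \<Longrightarrow> (\<And>\<psi>. \<psi> \<in> \<Delta> \<Longrightarrow> derivable L \<Gamma> \<psi>) \<Longrightarrow> derivable L \<Gamma> \<phi>"
  by (induction rule: derivable.induct) (auto intro: derivable.intros)

lemma derivable_mono: "derivable L \<Gamma> \<phi> \<Longrightarrow> \<Gamma> \<subseteq> \<Delta> \<Longrightarrow> derivable L \<Delta> \<phi>"
  by (erule derivable_trans) (auto intro: derivable_assm)

lemma derivable_cut: "derivable L \<Gamma> a \<Longrightarrow> derivable L (insert a \<Gamma>) b \<Longrightarrow> derivable L \<Gamma> b"
  by (erule derivable_trans[of L "insert a \<Gamma>"]) (auto intro: derivable_assm)

lemma derivable_prov_mp: "prov L (Imp a b) \<Longrightarrow> derivable L \<Gamma> a \<Longrightarrow> derivable L \<Gamma> b"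
  by (blast intro: derivable_mp derivable_prov)

lemma deduction_theorem: "derivable L (insert a \<Gamma>) b \<Longrightarrow> derivable L \<Gamma> (Imp a b)"
proof (induction "insert a \<Gamma>" b rule: derivable.induct)
  case (derivable_assm \<phi>)
  then show ?case
    by (cases "\<phi> = a")
      (auto intro: derivable_prov prov_Imp_refl derivable_prov_mp[OF prov_K] derivable.derivable_assm)
qed (auto intro: derivable_prov_mp[OF prov_K] derivable_prov
    derivable_mp[OF derivable_prov_mp[OF prov_S]])

lemma derivable_finite: "derivable L \<Gamma> \<phi> \<Longrightarrow> \<exists>F. finite F \<and> F \<subseteq> \<Gamma> \<and> derivable L F \<phi>"
proof (induction rule: derivable.induct)
  case (derivable_mp \<Gamma> \<phi> \<psi>)
  then obtain F G where "finite F" "F \<subseteq> \<Gamma>" "derivable L F (Imp \<phi> \<psi>)"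
    and "finite G" "G \<subseteq> \<Gamma>" "derivable L G \<phi>" by blast
  then show ?case
    by (meson derivable.derivable_mp derivable_mono finite_UnI le_sup_iff sup_ge1 sup_ge2)
qed (meson derivable.intros empty_subsetI finite.intros insert_subset singletonI)+

lemma derivable_And_iff: "derivable L \<Gamma> (And a b) \<longleftrightarrow> derivable L \<Gamma> a \<and> derivable L \<Gamma> b"
  by (blast intro: derivable_mp derivable_prov_mp[OF prov_And_intro]
      derivable_prov_mp[OF prov_And_left] derivable_prov_mp[OF prov_And_right])

lemma derivable_OrI1: "derivable L \<Gamma> a \<Longrightarrow> derivable L \<Gamma> (Or a b)"
  by (rule derivable_prov_mp[OF prov_Or_left])

lemma derivable_OrI2: "derivable L \<Gamma> b \<Longrightarrow> derivable L \<Gamma> (Or a b)"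
  by (rule derivable_prov_mp[OF prov_Or_right])

lemma derivable_OrE:
  "derivable L \<Gamma> (Or a b) \<Longrightarrow> derivable L (insert a \<Gamma>) c \<Longrightarrow> derivable L (insert b \<Gamma>) c \<Longrightarrow>
    derivable L \<Gamma> c"
  by (blast intro: derivable_mp deduction_theorem derivable_prov_mp[OF prov_Or_elim])

lemma derivable_BotE: "derivable L \<Gamma> Bot \<Longrightarrow> derivable L \<Gamma> c"
  by (rule derivable_prov_mp[OF prov_Bot_elim])

lemma derivable_Box: "derivable L \<Delta> a \<Longrightarrow> derivable L (Box ` \<Delta>) (Box a)"
  by (induction rule: derivable.induct)
    (auto intro: derivable.intros prov.nec derivable_mp[OF derivable_prov_mp[OF prov_Box_K]])

lemma derivable_Dia:
  assumes "derivable L (insert a \<Delta>) b"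
  shows "derivable L (insert (Dia a) (Box ` \<Delta>)) (Dia b)"
proof -
  have "derivable L (Box ` \<Delta>) (Box (Imp a b))"
    using assms by (intro derivable_Box deduction_theorem)
  then have "derivable L (insert (Dia a) (Box ` \<Delta>)) (Imp (Dia a) (Dia b))"
    by (rule derivable_prov_mp[OF prov_Dia_K derivable_mono]) blast
  then show ?thesis
    by (rule derivable_mp) (simp add: derivable_assm)
qed

lemma prov_Box_mono: "prov L (Imp a b) \<Longrightarrow> prov L (Imp (Box a) (Box b))"
  by (meson prov_Box_K prov.mp prov.nec)

lemma prov_Dia_mono: "prov L (Imp a b) \<Longrightarrow> prov L (Imp (Dia a) (Dia b))"
  by (meson prov_Dia_K prov.mp prov.nec)

fun Ors :: "form list \<Rightarrow> form" where
  "Ors [] = Bot"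
| "Ors (x # xs) = Or x (Ors xs)"

fun Ands :: "form list \<Rightarrow> form" where
  "Ands [] = Imp Bot Bot"
| "Ands (x # xs) = And x (Ands xs)"

lemma derivable_Ors_mono:
  "set xs \<subseteq> set ys \<Longrightarrow> derivable L \<Gamma> (Ors xs) \<Longrightarrow> derivable L \<Gamma> (Ors ys)"
proof (induction xs arbitrary: \<Gamma>)
  case Nil
  then show ?case by (simp add: derivable_BotE)
next
  case (Cons x xs)
  have "derivable L (insert x \<Gamma>) (Ors ys)"
  proof -
    have "x \<in> set ys" using Cons.prems(1) by simp
    then show ?thesis
      by (induction ys) (auto intro: derivable_OrI1 derivable_OrI2 derivable_assm)
  qed
  moreover have "derivable L (insert (Ors xs) \<Gamma>) (Ors ys)"
    using Cons by (simp add: derivable_assm)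
  ultimately show ?case
    using Cons.prems(2) by (auto intro: derivable_OrE)
qed

lemma derivable_Ors_append:
  "derivable L \<Gamma> (Ors (xs @ ys)) \<Longrightarrow> derivable L \<Gamma> (Or (Ors xs) (Ors ys))"
proof (induction xs arbitrary: \<Gamma>)
  case Nil
  then show ?case by (simp add: derivable_OrI2)
next
  case (Cons x xs)
  have "derivable L \<Gamma> (Or x (Ors (xs @ ys)))"
    using Cons.prems by simp
  moreover have "derivable L (insert x \<Gamma>) (Or (Ors (x # xs)) (Ors ys))"
    by (simp add: derivable_OrI1 derivable_assm)
  moreover have "derivable L (insert (Ors (xs @ ys)) \<Gamma>) (Or (Ors (x # xs)) (Ors ys))"
    by (rule derivable_OrE[OF Cons.IH[OF derivable_assm]])
      (auto intro: derivable_OrI1 derivable_OrI2 derivable_assm)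
  ultimately show ?case
    by (rule derivable_OrE)
qed

lemma derivable_Ors_Box:
  "derivable L \<Gamma> (Ors (map Box cs)) \<Longrightarrow> derivable L \<Gamma> (Box (Ors cs))"
proof (induction cs arbitrary: \<Gamma>)
  case Nil
  then show ?case by (simp add: derivable_BotE)
next
  case (Cons c cs)
  have "derivable L (insert (Box c) \<Gamma>) (Box (Ors (c # cs)))"
    by (simp add: derivable_prov_mp[OF prov_Box_mono[OF prov_Or_left]] derivable_assm)
  moreover have "derivable L (insert (Ors (map Box cs)) \<Gamma>) (Box (Ors (c # cs)))"
    by (simp add: derivable_prov_mp[OF prov_Box_mono[OF prov_Or_right]] Cons.IH derivable_assm)
  ultimately show ?case
    using Cons.prems by (auto intro: derivable_OrE)
qed

lemma derivable_Ands_iff: "derivable L \<Gamma> (Ands xs) \<longleftrightarrow> (\<forall>x\<in>set xs. derivable L \<Gamma> x)"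
  by (induction xs) (simp_all add: derivable_And_iff derivable_prov prov_Imp_refl)

lemma derivable_Dia_Ands:
  assumes "derivable L \<Gamma> (Dia (Ands xs))" "x \<in> set xs"
  shows "derivable L \<Gamma> (Dia x)"
proof -
  have "derivable L {Ands xs} x"
    using assms(2) derivable_Ands_iff[of L "{Ands xs}" xs] by (auto intro: derivable_assm)
  then have "prov L (Imp (Ands xs) x)"
    using deduction_theorem derivable_empty_iff by blast
  then show ?thesis
    using assms(1) by (blast intro: derivable_prov_mp prov_Dia_mono)
qed

lemma derivable_compact_Ands:
  assumes "derivable L (Y \<union> X) \<phi>"
  obtains ds where "set ds \<subseteq> Y" "derivable L (insert (Ands ds) X) \<phi>"
proof -
  obtain F where F: "finite F" "F \<subseteq> Y \<union> X" "derivable L F \<phi>"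
    using derivable_finite[OF assms] by blast
  obtain ds where ds: "set ds = F \<inter> Y"
    using finite_list[of "F \<inter> Y"] F(1) by blast
  have "derivable L (insert (Ands ds) X) \<psi>" if "\<psi> \<in> F" for \<psi>
  proof (cases "\<psi> \<in> Y")
    case True
    then have "derivable L (insert (Ands ds) X) (Ands ds)" "\<psi> \<in> set ds"
      using ds that by (auto intro: derivable_assm)
    then show ?thesis using derivable_Ands_iff by blast
  next
    case False
    then show ?thesis using F(2) that by (auto intro: derivable_assm)
  qed
  then show ?thesis
    using that ds derivable_trans[OF F(3)] by blast
qed

lemma list_subset_image: "set xs \<subseteq> f ` A \<Longrightarrow> \<exists>ys. xs = map f ys \<and> set ys \<subseteq> A"
proof (induction xs)
  case (Cons x xs)
  obtain y ys where "x = f y" "y \<in> A" "xs = map f ys" "set ys \<subseteq> A"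
    using Cons by auto
  then show ?case
    by (intro exI[of _ "y # ys"]) simp
qed simp

lemma derivable_Dia_image:
  assumes "derivable L (Dia ` \<Delta> \<union> \<Gamma>) \<phi>"
  obtains es where "set es \<subseteq> \<Delta>" "derivable L (insert (Dia (Ands es)) \<Gamma>) \<phi>"
proof -
  obtain ds where ds: "set ds \<subseteq> Dia ` \<Delta>" "derivable L (insert (Ands ds) \<Gamma>) \<phi>"
    using derivable_compact_Ands[OF assms] by blast
  obtain es where es: "ds = map Dia es" "set es \<subseteq> \<Delta>"
    using list_subset_image[OF ds(1)] by blast
  have "derivable L (insert (Dia (Ands es)) \<Gamma>) d" if d: "d \<in> set ds" for d
  proof -
    obtain e where "e \<in> set es" "d = Dia e"
      using d es(1) by auto
    then show ?thesis
      using derivable_Dia_Ands[of L "insert (Dia (Ands es)) \<Gamma>"] derivable_assm by blast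
  qed
  then have "derivable L (insert (Dia (Ands es)) \<Gamma>) (Ands ds)"
    using derivable_Ands_iff by blast
  then have "derivable L (insert (Dia (Ands es)) \<Gamma>) \<phi>"
    using derivable_cut derivable_mono[OF ds(2)] by (metis insert_commute subset_insertI)
  then show thesis
    using that es(2) by blast
qed

definition deductively_closed :: "logic \<Rightarrow> form set \<Rightarrow> bool" where
  "deductively_closed L \<Gamma> \<longleftrightarrow> (\<forall>\<phi>. derivable L \<Gamma> \<phi> \<longrightarrow> \<phi> \<in> \<Gamma>)"

definition prime_theory :: "logic \<Rightarrow> form set \<Rightarrow> bool" where
  "prime_theory L \<Gamma> \<longleftrightarrow> deductively_closed L \<Gamma> \<and> (\<forall>a b. Or a b \<in> \<Gamma> \<longrightarrow> a \<in> \<Gamma> \<or> b \<in> \<Gamma>)"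

definition boxset :: "form set \<Rightarrow> form set" where
  "boxset \<Gamma> = {\<phi>. Box \<phi> \<in> \<Gamma>}"

lemma closed_derivable: "deductively_closed L \<Gamma> \<Longrightarrow> derivable L \<Gamma> \<phi> \<Longrightarrow> \<phi> \<in> \<Gamma>"
  by (simp add: deductively_closed_def)

lemma closed_prov: "deductively_closed L \<Gamma> \<Longrightarrow> prov L \<phi> \<Longrightarrow> \<phi> \<in> \<Gamma>"
  by (simp add: closed_derivable derivable_prov)

lemma closed_prov_mp:
  "deductively_closed L \<Gamma> \<Longrightarrow> prov L (Imp a b) \<Longrightarrow> a \<in> \<Gamma> \<Longrightarrow> b \<in> \<Gamma>"
  by (meson closed_derivable derivable_assm derivable_prov_mp)

lemma closed_Imp_mp: "deductively_closed L \<Gamma> \<Longrightarrow> Imp a b \<in> \<Gamma> \<Longrightarrow> a \<in> \<Gamma> \<Longrightarrow> b \<in> \<Gamma>"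
  by (meson closed_derivable derivable_assm derivable_mp)

lemma closed_And_iff: "deductively_closed L \<Gamma> \<Longrightarrow> And a b \<in> \<Gamma> \<longleftrightarrow> a \<in> \<Gamma> \<and> b \<in> \<Gamma>"
  by (meson closed_derivable derivable_And_iff derivable_assm)

lemma closed_mem_iff: "deductively_closed L \<Gamma> \<Longrightarrow> \<phi> \<in> \<Gamma> \<longleftrightarrow> derivable L \<Gamma> \<phi>"
  using closed_derivable derivable_assm by blast

lemma closed_Ands_iff:
  "deductively_closed L \<Gamma> \<Longrightarrow> Ands xs \<in> \<Gamma> \<longleftrightarrow> set xs \<subseteq> \<Gamma>"
  by (simp add: closed_mem_iff derivable_Ands_iff subset_eq)

lemma prime_Or_iff: "prime_theory L \<Gamma> \<Longrightarrow> Or a b \<in> \<Gamma> \<longleftrightarrow> a \<in> \<Gamma> \<or> b \<in> \<Gamma>"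
  unfolding prime_theory_def
  by (meson closed_derivable derivable_OrI1 derivable_OrI2 derivable_assm)

lemma prime_Ors: "prime_theory L \<Gamma> \<Longrightarrow> Bot \<notin> \<Gamma> \<Longrightarrow> Ors xs \<in> \<Gamma> \<Longrightarrow> \<exists>x\<in>set xs. x \<in> \<Gamma>"
  by (induction xs) (auto simp: prime_Or_iff)

lemma prime_theory_UNIV: "prime_theory L UNIV"
  by (simp add: prime_theory_def deductively_closed_def)

lemma Box_boxset: "Box ` boxset \<Gamma> \<subseteq> \<Gamma>"
  by (auto simp: boxset_def)

lemma closed_Box_derivable:
  "deductively_closed L \<Gamma> \<Longrightarrow> derivable L (boxset \<Gamma>) a \<Longrightarrow> Box a \<in> \<Gamma>"
  using closed_derivable derivable_mono[OF derivable_Box Box_boxset] by blast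

lemma closed_Dia_derivable:
  assumes "deductively_closed L \<Gamma>" "derivable L (insert a (boxset \<Gamma>)) b" "Dia a \<in> \<Gamma>"
  shows "Dia b \<in> \<Gamma>"
proof -
  have "insert (Dia a) (Box ` boxset \<Gamma>) \<subseteq> \<Gamma>"
    using assms(3) Box_boxset by blast
  then show ?thesis
    using closed_derivable[OF assms(1) derivable_mono[OF derivable_Dia[OF assms(2)]]] by blast
qed

lemma boxset_subset: "deductively_closed L \<Gamma> \<Longrightarrow> boxset \<Gamma> \<subseteq> \<Gamma>"
  unfolding boxset_def using closed_prov_mp[OF _ prov_Box_T] by blast

lemma boxset_Box: "deductively_closed L \<Gamma> \<Longrightarrow> a \<in> boxset \<Gamma> \<Longrightarrow> Box a \<in> boxset \<Gamma>"
  unfolding boxset_def using closed_prov_mp[OF _ prov_Box_4] by blast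

section \<open>Lindenbaum's lemma\<close>

definition avoids :: "logic \<Rightarrow> form set \<Rightarrow> form set \<Rightarrow> bool" where
  "avoids L \<Gamma> A \<longleftrightarrow> (\<forall>xs. set xs \<subseteq> A \<longrightarrow> \<not> derivable L \<Gamma> (Ors xs))"

lemma avoidsD:
  assumes "avoids L \<Gamma> A"
  shows "\<not> derivable L \<Gamma> Bot" "a \<in> A \<Longrightarrow> \<not> derivable L \<Gamma> a"
proof -
  show "\<not> derivable L \<Gamma> Bot"
    using assms unfolding avoids_def by (drule_tac spec[of _ "[]"]) simp
  assume "a \<in> A"
  then have "\<not> derivable L \<Gamma> (Or a Bot)"
    using assms unfolding avoids_def by (drule_tac spec[of _ "[a]"]) simp
  then show "\<not> derivable L \<Gamma> a"
    using derivable_OrI1 by blast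
qed

lemma avoids_singleton: "\<not> derivable L \<Gamma> b \<Longrightarrow> avoids L \<Gamma> {b}"
proof (unfold avoids_def, intro allI impI notI)
  fix xs assume "\<not> derivable L \<Gamma> b" "set xs \<subseteq> {b}" "derivable L \<Gamma> (Ors xs)"
  then have "derivable L \<Gamma> (Or b Bot)"
    using derivable_Ors_mono[of xs "[b]"] by auto
  moreover have "derivable L (insert b \<Gamma>) b" "derivable L (insert Bot \<Gamma>) b"
    by (simp_all add: derivable_assm derivable_BotE)
  ultimately show False
    using \<open>\<not> derivable L \<Gamma> b\<close> derivable_OrE by blast
qed

lemma avoids_Union_chain:
  assumes "C \<noteq> {}" "subset.chain {\<Delta>. avoids L \<Delta> A} C"
  shows "avoids L (\<Union>C) A"
proof (unfold avoids_def, intro allI impI notI)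
  fix xs assume xs: "set xs \<subseteq> A" "derivable L (\<Union>C) (Ors xs)"
  obtain F where F: "finite F" "F \<subseteq> \<Union>C" "derivable L F (Ors xs)"
    using derivable_finite[OF xs(2)] by blast
  obtain \<Delta> where "\<Delta> \<in> C" "F \<subseteq> \<Delta>"
    using finite_subset_Union_chain[OF F(1,2) assms] by blast
  then have "avoids L \<Delta> A" "derivable L \<Delta> (Ors xs)"
    using assms(2) derivable_mono[OF F(3)] unfolding subset.chain_def by auto
  then show False
    using xs(1) unfolding avoids_def by blast
qed

lemma avoids_insert_derivable:
  "avoids L \<Delta> A \<Longrightarrow> derivable L \<Delta> \<phi> \<Longrightarrow> avoids L (insert \<phi> \<Delta>) A"
  unfolding avoids_def by (meson derivable_cut)

lemma avoids_insert_Or: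
  assumes "avoids L \<Delta> A" "Or a b \<in> \<Delta>"
  shows "avoids L (insert a \<Delta>) A \<or> avoids L (insert b \<Delta>) A"
proof (rule ccontr)
  assume "\<not> ?thesis"
  then have "\<not> avoids L (insert a \<Delta>) A" "\<not> avoids L (insert b \<Delta>) A"
    by simp_all
  then obtain xs ys where xs: "set xs \<subseteq> A" "derivable L (insert a \<Delta>) (Ors xs)"
    and ys: "set ys \<subseteq> A" "derivable L (insert b \<Delta>) (Ors ys)"
    unfolding avoids_def by blast
  have "derivable L (insert a \<Delta>) (Ors (xs @ ys))" "derivable L (insert b \<Delta>) (Ors (xs @ ys))"
    by (rule derivable_Ors_mono[OF _ xs(2)], simp) (rule derivable_Ors_mono[OF _ ys(2)], simp)
  then have "derivable L \<Delta> (Ors (xs @ ys))"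
    using derivable_OrE[OF derivable_assm[OF assms(2)]] by blast
  moreover have "set (xs @ ys) \<subseteq> A"
    using xs(1) ys(1) by simp
  ultimately show False
    using assms(1) unfolding avoids_def by blast
qed

lemma lindenbaum:
  assumes "avoids L \<Gamma> A"
  obtains \<Delta> where "\<Gamma> \<subseteq> \<Delta>" "prime_theory L \<Delta>" "avoids L \<Delta> A"
proof -
  define F where "F = {\<Delta>. \<Gamma> \<subseteq> \<Delta> \<and> avoids L \<Delta> A}"
  have "\<exists>M\<in>F. \<forall>X\<in>F. M \<subseteq> X \<longrightarrow> X = M"
  proof (rule subset_Zorn_nonempty)
    show "F \<noteq> {}"
      using assms unfolding F_def by blast
  next
    fix C assume C: "C \<noteq> {}" "subset.chain F C"
    have "subset.chain {\<Delta>. avoids L \<Delta> A} C"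
      using C(2) unfolding subset.chain_def F_def by blast
    moreover have "\<Gamma> \<subseteq> \<Union>C"
      using C unfolding subset.chain_def F_def by blast
    ultimately show "\<Union>C \<in> F"
      using avoids_Union_chain[OF C(1)] unfolding F_def by blast
  qed
  then obtain M where "M \<in> F" and maximal: "\<forall>X\<in>F. M \<subseteq> X \<longrightarrow> X = M"
    by blast
  then have M: "\<Gamma> \<subseteq> M" "avoids L M A"
    unfolding F_def by simp_all
  have insert_mem: "\<phi> \<in> M" if "avoids L (insert \<phi> M) A" for \<phi>
  proof -
    have "insert \<phi> M \<in> F"
      using that M(1) unfolding F_def by blast
    then show ?thesis
      using maximal by blast
  qed
  have "deductively_closed L M"
    unfolding deductively_closed_def using insert_mem avoids_insert_derivable[OF M(2)] by blast
  moreover have "a \<in> M \<or> b \<in> M" if "Or a b \<in> M" for a b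
    using insert_mem avoids_insert_Or[OF M(2) that] by blast
  ultimately show ?thesis
    using that M unfolding prime_theory_def by blast
qed

lemma lindenbaum_avoiding:
  assumes "avoids L \<Gamma> A"
  obtains \<Delta> where "\<Gamma> \<subseteq> \<Delta>" "prime_theory L \<Delta>" "Bot \<notin> \<Delta>" "A \<inter> \<Delta> = {}"
proof -
  obtain \<Delta> where \<Delta>: "\<Gamma> \<subseteq> \<Delta>" "prime_theory L \<Delta>" "avoids L \<Delta> A"
    using lindenbaum[OF assms] by blast
  moreover have "Bot \<notin> \<Delta>" "A \<inter> \<Delta> = {}"
    using avoidsD[OF \<Delta>(3)] derivable_assm by blast+
  ultimately show thesis
    using that by blast
qed

lemma lindenbaum_refuting:
  assumes "\<not> derivable L \<Gamma> b"
  obtains \<Delta> where "\<Gamma> \<subseteq> \<Delta>" "prime_theory L \<Delta>" "Bot \<notin> \<Delta>" "b \<notin> \<Delta>"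
  by (rule lindenbaum_avoiding[OF avoids_singleton[OF assms]]) blast

section \<open>Soundness\<close>

locale bi_model =
  fixes W :: "'w set" and Wb :: "'w set" and R S :: "'w \<Rightarrow> 'w \<Rightarrow> bool" and V :: "nat \<Rightarrow> 'w set"
  assumes bi_frame: "bi_frame W Wb R S" and valuation: "valuation W Wb R V"
begin

abbreviation forces :: "'w \<Rightarrow> form \<Rightarrow> bool" where
  "forces w \<phi> \<equiv> sat W Wb R S V w \<phi>"

lemma R_refl: "w \<in> W \<Longrightarrow> R w w"
  and R_trans: "x \<in> W \<Longrightarrow> y \<in> W \<Longrightarrow> z \<in> W \<Longrightarrow> R x y \<Longrightarrow> R y z \<Longrightarrow> R x z"
  and S_refl: "w \<in> W \<Longrightarrow> S w w"
  and S_trans: "x \<in> W \<Longrightarrow> y \<in> W \<Longrightarrow> z \<in> W \<Longrightarrow> S x y \<Longrightarrow> S y z \<Longrightarrow> S x z"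
  using bi_frame unfolding bi_frame_def preorder_on_def by blast+

lemma fallible_R: "w \<in> Wb \<Longrightarrow> v \<in> W \<Longrightarrow> R w v \<Longrightarrow> v \<in> Wb"
  and fallible_S: "w \<in> Wb \<Longrightarrow> v \<in> W \<Longrightarrow> S w v \<Longrightarrow> v \<in> Wb"
  using bi_frame unfolding bi_frame_def up_closed_def by blast+

lemma forces_mono: "w \<in> W \<Longrightarrow> v \<in> W \<Longrightarrow> R w v \<Longrightarrow> forces w \<phi> \<Longrightarrow> forces v \<phi>"
proof (induction \<phi> arbitrary: w v)
  case (Var p)
  then show ?case
    using valuation unfolding valuation_def up_closed_def by auto
next
  case Bot
  then show ?case using fallible_R by simp
next
  case (Or \<phi> \<psi>)
  then show ?case by auto
next
  case (Imp \<phi> \<psi>)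
  then show ?case using R_trans[of w v] by (simp; blast)
next
  case (Dia \<phi>)
  then show ?case using R_trans[of w v] by (simp; blast)
next
  case (Box \<phi>)
  then show ?case using R_trans[of w v] by (simp; blast)
qed simp

lemma fallible_forces: "v \<in> W \<Longrightarrow> v \<in> Wb \<Longrightarrow> forces v \<phi>"
proof (induction \<phi> arbitrary: v)
  case (Var p)
  then show ?case
    using valuation unfolding valuation_def by auto
next
  case (Imp \<phi> \<psi>)
  then show ?case
    using fallible_R by simp
next
  case (Dia \<phi>)
  show ?case
  proof (simp, intro ballI impI)
    fix u assume "u \<in> W" "R v u"
    then have "u \<in> Wb"
      using fallible_R Dia.prems by blast
    then show "\<exists>x\<in>W. S u x \<and> forces x \<phi>"
      using Dia.IH S_refl \<open>u \<in> W\<close> by blast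
  qed
next
  case (Box \<phi>)
  show ?case
  proof (simp, intro ballI impI)
    fix u x assume "u \<in> W" "x \<in> W" "R v u" "S u x"
    then have "x \<in> Wb"
      using fallible_R fallible_S Box.prems by blast
    then show "forces x \<phi>"
      using Box.IH \<open>x \<in> W\<close> by blast
  qed
qed simp_all

lemma ipc_axiom_sound: "ipc_axiom \<phi> \<Longrightarrow> w \<in> W \<Longrightarrow> forces w \<phi>"
proof (induction rule: ipc_axiom.induct)
  case (ipcS \<phi> \<psi> \<chi>)
  show ?case
  proof (simp, intro ballI impI)
    fix v u x
    assume a: "v \<in> W" "R w v" "u \<in> W" "R v u" "x \<in> W" "R u x"
      and h1: "\<forall>y\<in>W. R v y \<longrightarrow> forces y \<phi> \<longrightarrow> (\<forall>z\<in>W. R y z \<longrightarrow> forces z \<psi> \<longrightarrow> forces z \<chi>)"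
      and h2: "\<forall>y\<in>W. R u y \<longrightarrow> forces y \<phi> \<longrightarrow> forces y \<psi>" and x: "forces x \<phi>"
    have "R v x" "R x x"
      using R_trans R_refl a by blast+
    then show "forces x \<chi>"
      using h1 h2 a x by blast
  qed
next
  case (ipcDE \<phi> \<chi> \<psi>)
  show ?case
  proof (unfold sat.simps, intro ballI impI)
    fix v u x
    assume a: "v \<in> W" "R w v" "u \<in> W" "R v u" "x \<in> W" "R u x"
      and h1: "\<forall>y\<in>W. R v y \<longrightarrow> forces y \<phi> \<longrightarrow> forces y \<chi>"
      and h2: "\<forall>y\<in>W. R u y \<longrightarrow> forces y \<psi> \<longrightarrow> forces y \<chi>"
      and x: "forces x \<phi> \<or> forces x \<psi>"
    have "R v x"
      using R_trans a by blast
    then show "forces x \<chi>"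
      using h1 h2 a x by blast
  qed
qed (auto intro: forces_mono fallible_forces)

lemma four_sound:
  assumes "backward_confluent W R S \<or> downward_confluent W R S" "w \<in> W"
  shows "forces w (Imp (Box a) (Box (Box a)))"
proof (unfold sat.simps, intro ballI impI)
  fix v u x y z
  assume v: "v \<in> W" "R w v" and box: "\<forall>u\<in>W. \<forall>x\<in>W. R v u \<longrightarrow> S u x \<longrightarrow> forces x a"
    and u: "u \<in> W" "x \<in> W" "R v u" "S u x" "y \<in> W" "z \<in> W" "R x y" "S y z"
  show "forces z a"
    using assms(1)
  proof
    assume "backward_confluent W R S"
    then obtain u' where "u' \<in> W" "R u u'" "S u' y"
      using u unfolding backward_confluent_def by blast
    then show ?thesis
      using box u v R_trans[of v u u'] S_trans[of u' y z] by blast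
  next
    assume "downward_confluent W R S"
    then obtain x' where "x' \<in> W" "S x x'" "R x' z"
      using u unfolding downward_confluent_def by blast
    then show ?thesis
      using box u v S_trans[of u x x'] forces_mono[of x' z a] by blast
  qed
qed

lemma cs4_axiom_sound:
  assumes "cs4_axiom \<phi>" "backward_confluent W R S \<or> downward_confluent W R S" "w \<in> W"
  shows "forces w \<phi>"
  using assms(1)
proof cases
  case (axK a b)
  then show ?thesis
    using assms(3) by simp (meson R_refl R_trans)
next
  case (axKd a b)
  then show ?thesis
    using assms(3) by simp (meson R_refl R_trans)
next
  case (axT a)
  then show ?thesis
    using assms(3) by simp (meson R_refl S_refl)
next
  case (axTd a)
  then show ?thesis
    using assms(3) by simp (meson S_refl forces_mono)
next
  case (ax4 a)
  then show ?thesis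
    using four_sound assms(2,3) by simp
next
  case (ax4d a)
  then show ?thesis
    using assms(3) by simp (meson R_refl S_trans)
qed


lemma FS_sound:
  assumes "backward_confluent W R S" "forward_confluent W R S" "w \<in> W"
  shows "forces w (Imp (Imp (Dia a) (Box b)) (Box (Imp a b)))"
proof (unfold sat.simps, intro ballI impI)
  fix w1 u v x
  assume w1: "w1 \<in> W" "R w w1"
    and h: "\<forall>y\<in>W. R w1 y \<longrightarrow> (\<forall>u\<in>W. R y u \<longrightarrow> (\<exists>v\<in>W. S u v \<and> forces v a)) \<longrightarrow>
              (\<forall>u\<in>W. \<forall>v\<in>W. R y u \<longrightarrow> S u v \<longrightarrow> forces v b)"
    and u: "u \<in> W" "v \<in> W" "R w1 u" "S u v" "x \<in> W" "R v x" "forces x a"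
  obtain u' where u': "u' \<in> W" "R u u'" "S u' x"
    using assms(1) u unfolding backward_confluent_def by blast
  have "\<forall>y\<in>W. R u' y \<longrightarrow> (\<exists>z\<in>W. S y z \<and> forces z a)"
  proof (intro ballI impI)
    fix y assume "y \<in> W" "R u' y"
    then obtain z where "z \<in> W" "R x z" "S y z"
      using assms(2) u' u unfolding forward_confluent_def by blast
    then show "\<exists>z\<in>W. S y z \<and> forces z a"
      using forces_mono[of x z a] u by blast
  qed
  moreover have "R w1 u'"
    using R_trans[of w1 u u'] w1 u u' by blast
  ultimately have "\<forall>u\<in>W. \<forall>v\<in>W. R u' u \<longrightarrow> S u v \<longrightarrow> forces v b"
    using h u'(1) by blast
  then show "forces x b"
    using R_refl u'(1,3) u(5) by blast
qed

lemma DP_sound: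
  assumes "forward_confluent W R S" "w \<in> W"
  shows "forces w (Imp (Dia (Or a b)) (Or (Dia a) (Dia b)))"
proof (unfold sat.simps, intro ballI impI)
  fix v
  assume v: "v \<in> W" "R w v" and h: "\<forall>u\<in>W. R v u \<longrightarrow> (\<exists>x\<in>W. S u x \<and> (forces x a \<or> forces x b))"
  then obtain x where x: "x \<in> W" "S v x" "forces x a \<or> forces x b"
    using R_refl by blast
  have "\<forall>u\<in>W. R v u \<longrightarrow> (\<exists>x'\<in>W. S u x' \<and> forces x' c)" if "forces x c" for c
  proof (intro ballI impI)
    fix u assume "u \<in> W" "R v u"
    then obtain x' where "x' \<in> W" "R x x'" "S u x'"
      using assms(1) v x unfolding forward_confluent_def by blast
    then show "\<exists>x'\<in>W. S u x' \<and> forces x' c"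
      using forces_mono[of x x' c] x that by blast
  qed
  then show "(\<forall>u\<in>W. R v u \<longrightarrow> (\<exists>x\<in>W. S u x \<and> forces x a)) \<or>
    (\<forall>u\<in>W. R v u \<longrightarrow> (\<exists>x\<in>W. S u x \<and> forces x b))"
    using x(3) by blast
qed

lemma N_sound: "Wb = {} \<Longrightarrow> w \<in> W \<Longrightarrow> forces w (Neg (Dia Bot))"
  unfolding Neg_def using R_refl by simp blast

lemma CD_sound:
  assumes "forward_confluent W R S" "downward_confluent W R S" "w \<in> W"
  shows "forces w (Imp (Box (Or a b)) (Or (Box a) (Dia b)))"
proof (unfold sat.simps, intro ballI impI)
  fix w1
  assume w1: "w1 \<in> W" "R w w1"
    and h: "\<forall>u\<in>W. \<forall>v\<in>W. R w1 u \<longrightarrow> S u v \<longrightarrow> forces v a \<or> forces v b"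
  show "(\<forall>u\<in>W. \<forall>v\<in>W. R w1 u \<longrightarrow> S u v \<longrightarrow> forces v a) \<or>
    (\<forall>u\<in>W. R w1 u \<longrightarrow> (\<exists>v\<in>W. S u v \<and> forces v b))"
  proof (rule ccontr)
    assume "\<not> ?thesis"
    then obtain u1 v1 u2 where u: "u1 \<in> W" "v1 \<in> W" "R w1 u1" "S u1 v1" "\<not> forces v1 a"
      "u2 \<in> W" "R w1 u2" "\<forall>v\<in>W. S u2 v \<longrightarrow> \<not> forces v b"
      by blast
    obtain w' where w': "w' \<in> W" "S w1 w'" "R w' v1"
      using assms(2) u w1 unfolding downward_confluent_def by blast
    have "\<not> forces w' a"
      using forces_mono[of w' v1 a] w' u by blast
    then have "forces w' b"
      using h w1 w' R_refl by blast
    obtain v' where "v' \<in> W" "R w' v'" "S u2 v'"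
      using assms(1) w1 w' u unfolding forward_confluent_def by blast
    then show False
      using forces_mono[of w' v' b] \<open>forces w' b\<close> w' u by blast
  qed
qed

lemma GD_sound:
  assumes "locally_linear W R" "w \<in> W"
  shows "forces w (Or (Imp a b) (Imp b a))"
proof (rule ccontr)
  assume "\<not> ?thesis"
  then obtain u1 u2 where u: "u1 \<in> W" "R w u1" "forces u1 a" "\<not> forces u1 b"
    "u2 \<in> W" "R w u2" "forces u2 b" "\<not> forces u2 a"
    by auto
  then have "R u1 u2 \<or> R u2 u1"
    using assms unfolding locally_linear_def by blast
  then show False
    using forces_mono[of u1 u2 a] forces_mono[of u2 u1 b] u by blast
qed

lemma extra_axiom_sound:
  assumes "logic_frame L W Wb R S" "extra_axiom L \<phi>" "w \<in> W"
  shows "forces w \<phi>"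
proof (cases L)
  case GS4
  then have "backward_confluent W R S" "forward_confluent W R S" "Wb = {}" "locally_linear W R"
    using assms(1) by simp_all
  note sound = FS_sound[OF this(1,2) assms(3)] DP_sound[OF this(2) assms(3)]
    N_sound[OF this(3) assms(3)] GD_sound[OF this(4) assms(3)]
  from assms(2) GS4 have "FS_ax \<phi> \<or> DP_ax \<phi> \<or> N_ax \<phi> \<or> GD_ax \<phi>"
    by simp
  then show ?thesis
    unfolding FS_ax_def DP_ax_def N_ax_def GD_ax_def using sound by blast
next
  case S4I
  then have "forward_confluent W R S" "downward_confluent W R S" "Wb = {}"
    using assms(1) by simp_all
  note sound = DP_sound[OF this(1) assms(3)] N_sound[OF this(3) assms(3)]
    CD_sound[OF this(1,2) assms(3)]
  from assms(2) S4I have "DP_ax \<phi> \<or> N_ax \<phi> \<or> CD_ax \<phi>"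
    by simp
  then show ?thesis
    unfolding DP_ax_def N_ax_def CD_ax_def using sound by blast
qed (use assms in simp)

end

lemma logic_frame_bi_frame: "logic_frame L W Wb R S \<Longrightarrow> bi_frame W Wb R S"
  by (cases L) auto

lemma logic_frame_confluent:
  "logic_frame L W Wb R S \<Longrightarrow> backward_confluent W R S \<or> downward_confluent W R S"
  by (cases L) simp_all

theorem soundness:
  assumes "prov L \<phi>" "logic_frame L W Wb R S" "valuation W Wb R V" "w \<in> W"
  shows "sat W Wb R S V w \<phi>"
proof -
  interpret bi_model W Wb R S V
    using logic_frame_bi_frame[OF assms(2)] assms(3) by unfold_locales
  show ?thesis
    using assms(1,4)
  proof (induction arbitrary: w rule: prov.induct)
    case (ipc \<phi>)
    then show ?case by (rule ipc_axiom_sound)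
  next
    case (cs4 \<phi>)
    then show ?case by (rule cs4_axiom_sound[OF _ logic_frame_confluent[OF assms(2)]])
  next
    case (extra \<phi>)
    then show ?case by (rule extra_axiom_sound[OF assms(2)])
  next
    case (mp \<phi> \<psi>)
    then show ?case
      using R_refl[of w] by simp
  next
    case (nec \<phi>)
    then show ?case by simp
  qed
qed

lemma prov_valid_in: "prov L \<phi> \<Longrightarrow> valid_in (T :: 'w itself) L \<phi>"
  unfolding valid_in_def model_valid_def by (auto intro: soundness)

section \<open>Canonical models\<close>

locale canonical_model =
  fixes L :: logic and W :: "'w set" and Wb :: "'w set" and R S :: "'w \<Rightarrow> 'w \<Rightarrow> bool"
    and V :: "nat \<Rightarrow> 'w set" and th :: "'w \<Rightarrow> form set"
  assumes prime_theory_th: "w \<in> W \<Longrightarrow> prime_theory L (th w)"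
    and th_onto_consistent: "prime_theory L \<Gamma> \<Longrightarrow> Bot \<notin> \<Gamma> \<Longrightarrow> \<exists>w\<in>W. th w = \<Gamma>"
    and fallible_iff: "Wb = {w \<in> W. Bot \<in> th w}"
    and valuation_iff: "V p = {w \<in> W. Var p \<in> th w}"
    and R_eq: "R = (\<lambda>w v. th w \<subseteq> th v)"
    and S_boxset: "u \<in> W \<Longrightarrow> v \<in> W \<Longrightarrow> S u v \<Longrightarrow> boxset (th u) \<subseteq> th v"
    and Box_refuter:
      "w \<in> W \<Longrightarrow> Box a \<notin> th w \<Longrightarrow> \<exists>u\<in>W. \<exists>v\<in>W. th w \<subseteq> th u \<and> S u v \<and> a \<notin> th v"
    and Dia_witness: "u \<in> W \<Longrightarrow> Dia a \<in> th u \<Longrightarrow> \<exists>v\<in>W. S u v \<and> a \<in> th v"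
    and Dia_refuter:
      "w \<in> W \<Longrightarrow> Dia a \<notin> th w \<Longrightarrow> \<exists>u\<in>W. th w \<subseteq> th u \<and> (\<forall>v\<in>W. S u v \<longrightarrow> a \<notin> th v)"
begin

lemma closed_th: "w \<in> W \<Longrightarrow> deductively_closed L (th w)"
  using prime_theory_th unfolding prime_theory_def by blast

lemma Imp_refuter:
  assumes "w \<in> W" "Imp a b \<notin> th w"
  shows "\<exists>v\<in>W. th w \<subseteq> th v \<and> a \<in> th v \<and> b \<notin> th v"
proof -
  have "\<not> derivable L (insert a (th w)) b"
    using assms(2) closed_derivable[OF closed_th[OF assms(1)] deduction_theorem] by blast
  then obtain \<Delta> where \<Delta>: "insert a (th w) \<subseteq> \<Delta>" "prime_theory L \<Delta>" "Bot \<notin> \<Delta>" "b \<notin> \<Delta>"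
    by (rule lindenbaum_refuting)
  then obtain v where "v \<in> W" "th v = \<Delta>"
    using th_onto_consistent by blast
  then show ?thesis
    using \<Delta>(1,4) by blast
qed

lemma truth_lemma: "w \<in> W \<Longrightarrow> sat W Wb R S V w \<phi> \<longleftrightarrow> \<phi> \<in> th w"
proof (induction \<phi> arbitrary: w)
  case (Var p)
  then show ?case by (simp add: valuation_iff)
next
  case Bot
  then show ?case by (simp add: fallible_iff)
next
  case (And a b)
  then show ?case by (simp add: closed_And_iff[OF closed_th])
next
  case (Or a b)
  then show ?case by (simp add: prime_Or_iff[OF prime_theory_th])
next
  case (Imp a b)
  have "sat W Wb R S V w (Imp a b) \<longleftrightarrow> (\<forall>v\<in>W. th w \<subseteq> th v \<longrightarrow> a \<in> th v \<longrightarrow> b \<in> th v)"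
    using Imp.IH by (simp add: R_eq)
  also have "\<dots> \<longleftrightarrow> Imp a b \<in> th w"
    using Imp_refuter[OF Imp.prems] closed_Imp_mp[OF closed_th] by blast
  finally show ?case .
next
  case (Box a)
  have "sat W Wb R S V w (Box a) \<longleftrightarrow> (\<forall>u\<in>W. \<forall>v\<in>W. th w \<subseteq> th u \<longrightarrow> S u v \<longrightarrow> a \<in> th v)"
    using Box.IH by (simp add: R_eq)
  also have "\<dots> \<longleftrightarrow> Box a \<in> th w"
    using Box_refuter[OF Box.prems] S_boxset unfolding boxset_def by blast
  finally show ?case .
next
  case (Dia a)
  have "sat W Wb R S V w (Dia a) \<longleftrightarrow> (\<forall>u\<in>W. th w \<subseteq> th u \<longrightarrow> (\<exists>v\<in>W. S u v \<and> a \<in> th v))"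
    using Dia.IH by (simp add: R_eq)
  also have "\<dots> \<longleftrightarrow> Dia a \<in> th w"
    using Dia_refuter[OF Dia.prems] Dia_witness by blast
  finally show ?case .
qed

lemma inconsistent_th: "w \<in> W \<Longrightarrow> Bot \<in> th w \<Longrightarrow> \<phi> \<in> th w"
  using closed_prov_mp[OF closed_th prov_Bot_elim] by blast

lemma valuation: "valuation W Wb R V"
  unfolding valuation_def up_closed_def valuation_iff fallible_iff R_eq
  using inconsistent_th by auto

lemma bi_frame:
  assumes "preorder_on W S"
  shows "bi_frame W Wb R S"
proof -
  have "preorder_on W R"
    unfolding preorder_on_def R_eq by auto
  moreover have "Wb \<subseteq> W" "up_closed W R Wb"
    unfolding up_closed_def fallible_iff R_eq by auto
  moreover have "up_closed W S Wb"
  proof (unfold up_closed_def, intro ballI impI)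
    fix u v assume "u \<in> Wb" "v \<in> W" "S u v"
    then have "u \<in> W" "Box Bot \<in> th u"
      using inconsistent_th unfolding fallible_iff by auto
    then show "v \<in> Wb"
      using S_boxset \<open>v \<in> W\<close> \<open>S u v\<close> unfolding fallible_iff boxset_def by blast
  qed
  ultimately show ?thesis
    using assms unfolding bi_frame_def by blast
qed

lemma refutes:
  assumes "\<not> prov L \<phi>"
  shows "\<not> model_valid W Wb R S V \<phi>"
proof -
  have "\<not> derivable L {} \<phi>"
    using assms derivable_empty_iff by blast
  then obtain \<Delta> where \<Delta>: "prime_theory L \<Delta>" "Bot \<notin> \<Delta>" "\<phi> \<notin> \<Delta>"
    by (rule lindenbaum_refuting)
  then obtain w where w: "w \<in> W" "th w = \<Delta>"
    using th_onto_consistent by blast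
  then have "w \<in> W - Wb"
    using \<Delta>(2) unfolding fallible_iff by blast
  moreover have "\<not> sat W Wb R S V w \<phi>"
    using truth_lemma[OF w(1)] w(2) \<Delta>(3) by simp
  ultimately show ?thesis
    unfolding model_valid_def by blast
qed

end

section \<open>The canonical model of CS4\<close>

text \<open>Promises are inherited along \<open>cs4_access\<close>, so \<open>(\<Gamma>, Some \<theta>)\<close> refutes \<open>\<diamond>\<theta>\<close>. The
  inconsistent theory \<open>UNIV\<close> is the fallible world; it witnesses every \<open>\<diamond>\<close>-formula at worlds
  without a promise.\<close>

definition cs4_worlds :: "logic \<Rightarrow> (form set \<times> form option) set" where
  "cs4_worlds L = {(\<Gamma>, t). prime_theory L \<Gamma> \<and> (\<forall>\<theta>. t = Some \<theta> \<longrightarrow> Dia \<theta> \<notin> \<Gamma>)}"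

definition cs4_access :: "form set \<times> form option \<Rightarrow> form set \<times> form option \<Rightarrow> bool" where
  "cs4_access w v \<longleftrightarrow>
     boxset (fst w) \<subseteq> fst v \<and> (\<forall>\<theta>. snd w = Some \<theta> \<longrightarrow> Dia \<theta> \<notin> fst v \<and> snd v = Some \<theta>)"

lemma cs4_worlds_iff:
  "(\<Gamma>, t) \<in> cs4_worlds L \<longleftrightarrow> prime_theory L \<Gamma> \<and> (\<forall>\<theta>. t = Some \<theta> \<longrightarrow> Dia \<theta> \<notin> \<Gamma>)"
  by (simp add: cs4_worlds_def)

lemma cs4_Box_refuter:
  assumes "w \<in> cs4_worlds L" "Box a \<notin> fst w"
  shows "\<exists>u\<in>cs4_worlds L. \<exists>v\<in>cs4_worlds L. fst w \<subseteq> fst u \<and> cs4_access u v \<and> a \<notin> fst v"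
proof -
  obtain \<Gamma> t where w: "w = (\<Gamma>, t)" "prime_theory L \<Gamma>"
    using assms(1) unfolding cs4_worlds_def by blast
  then have "\<not> derivable L (boxset \<Gamma>) a"
    using assms(2) closed_Box_derivable prime_theory_def by auto
  then obtain \<Delta> where \<Delta>: "boxset \<Gamma> \<subseteq> \<Delta>" "prime_theory L \<Delta>" "a \<notin> \<Delta>"
    by (rule lindenbaum_refuting)
  have "(\<Gamma>, None) \<in> cs4_worlds L" "(\<Delta>, None) \<in> cs4_worlds L"
    using w(2) \<Delta>(2) by (simp_all add: cs4_worlds_iff)
  moreover have "cs4_access (\<Gamma>, None) (\<Delta>, None)"
    using \<Delta>(1) by (simp add: cs4_access_def)
  ultimately show ?thesis
    using w(1) \<Delta>(3) by force
qed

lemma cs4_Dia_refuter: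
  assumes "w \<in> cs4_worlds L" "Dia a \<notin> fst w"
  shows "\<exists>u\<in>cs4_worlds L. fst w \<subseteq> fst u \<and> (\<forall>v\<in>cs4_worlds L. cs4_access u v \<longrightarrow> a \<notin> fst v)"
proof -
  obtain \<Gamma> t where w: "w = (\<Gamma>, t)" "prime_theory L \<Gamma>"
    using assms(1) unfolding cs4_worlds_def by blast
  have "a \<notin> fst v" if "v \<in> cs4_worlds L" "cs4_access (\<Gamma>, Some a) v" for v
  proof
    assume "a \<in> fst v"
    then have "Dia a \<in> fst v"
      using that(1) closed_prov_mp[OF _ prov_Dia_T]
      unfolding cs4_worlds_def prime_theory_def by auto
    then show False
      using that(2) by (simp add: cs4_access_def)
  qed
  moreover have "(\<Gamma>, Some a) \<in> cs4_worlds L"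
    using w assms(2) by (simp add: cs4_worlds_iff)
  ultimately show ?thesis
    using w(1) by force
qed

lemma cs4_Dia_witness:
  assumes "u \<in> cs4_worlds L" "Dia a \<in> fst u"
  shows "\<exists>v\<in>cs4_worlds L. cs4_access u v \<and> a \<in> fst v"
proof -
  obtain \<Gamma> t where u: "u = (\<Gamma>, t)" "prime_theory L \<Gamma>" "\<forall>\<theta>. t = Some \<theta> \<longrightarrow> Dia \<theta> \<notin> \<Gamma>"
    using assms(1) unfolding cs4_worlds_def by blast
  then have closed: "deductively_closed L \<Gamma>"
    unfolding prime_theory_def by blast
  show ?thesis
  proof (cases t)
    case None
    have "(UNIV, None) \<in> cs4_worlds L"
      by (simp add: cs4_worlds_iff prime_theory_UNIV)
    moreover have "cs4_access u (UNIV, None)"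
      using u None by (simp add: cs4_access_def)
    ultimately show ?thesis by force
  next
    case (Some \<theta>)
    have "\<not> derivable L (insert a (boxset \<Gamma>)) (Dia \<theta>)"
    proof
      assume "derivable L (insert a (boxset \<Gamma>)) (Dia \<theta>)"
      then have "Dia (Dia \<theta>) \<in> \<Gamma>"
        using closed_Dia_derivable[OF closed] assms(2) u(1) by simp
      then show False
        using closed_prov_mp[OF closed prov_Dia_4] u(3) Some by blast
    qed
    then obtain \<Delta> where \<Delta>: "insert a (boxset \<Gamma>) \<subseteq> \<Delta>" "prime_theory L \<Delta>" "Dia \<theta> \<notin> \<Delta>"
      by (rule lindenbaum_refuting)
    then have "(\<Delta>, Some \<theta>) \<in> cs4_worlds L" "cs4_access u (\<Delta>, Some \<theta>)"
      using u(1) Some by (simp_all add: cs4_worlds_iff cs4_access_def)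
    then show ?thesis
      using \<Delta>(1) by force
  qed
qed

lemma cs4_canonical_model:
  "canonical_model L (cs4_worlds L) {w \<in> cs4_worlds L. Bot \<in> fst w} (\<lambda>w v. fst w \<subseteq> fst v)
    cs4_access (\<lambda>p. {w \<in> cs4_worlds L. Var p \<in> fst w}) fst"
proof
  show "prime_theory L (fst w)" if "w \<in> cs4_worlds L" for w
    using that unfolding cs4_worlds_def by auto
  show "\<exists>w\<in>cs4_worlds L. fst w = \<Gamma>" if "prime_theory L \<Gamma>" for \<Gamma>
  proof
    show "(\<Gamma>, None) \<in> cs4_worlds L"
      using that by (simp add: cs4_worlds_iff)
  qed simp
  show "boxset (fst u) \<subseteq> fst v" if "cs4_access u v" for u v
    using that by (simp add: cs4_access_def)
qed (fact refl cs4_Box_refuter cs4_Dia_witness cs4_Dia_refuter)+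

lemma cs4_access_preorder: "preorder_on (cs4_worlds L) cs4_access"
proof -
  have closed: "deductively_closed L (fst w)" if "w \<in> cs4_worlds L" for w
    using that unfolding cs4_worlds_def prime_theory_def by auto
  have "cs4_access w w" if "w \<in> cs4_worlds L" for w
    using that boxset_subset[OF closed[OF that]] unfolding cs4_worlds_def cs4_access_def by auto
  moreover have "cs4_access x z" if "x \<in> cs4_worlds L" "cs4_access x y" "cs4_access y z" for x y z
    using that boxset_Box[OF closed[OF that(1)]] unfolding cs4_access_def boxset_def by auto
  ultimately show ?thesis
    unfolding preorder_on_def by blast
qed

lemma cs4_backward_confluent:
  "backward_confluent (cs4_worlds L) (\<lambda>w v. fst w \<subseteq> fst v) cs4_access"
proof (unfold backward_confluent_def, intro ballI impI)
  fix w v v' :: "form set \<times> form option"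
  assume "w \<in> cs4_worlds L" "cs4_access w v" "fst v \<subseteq> fst v'"
  then have "(fst w, None) \<in> cs4_worlds L" "cs4_access (fst w, None) v'"
    by (auto simp: cs4_worlds_def cs4_access_def)
  then show "\<exists>w'\<in>cs4_worlds L. fst w \<subseteq> fst w' \<and> cs4_access w' v'"
    by (intro bexI[of _ "(fst w, None)"]) simp_all
qed

lemma cs4_countermodel:
  assumes "\<not> prov CS4 \<phi>"
  shows "\<exists>Wb R S V. logic_frame CS4 (cs4_worlds CS4) Wb R S \<and> valuation (cs4_worlds CS4) Wb R V \<and>
    \<not> model_valid (cs4_worlds CS4) Wb R S V \<phi>"
proof -
  interpret canonical_model CS4 "cs4_worlds CS4" "{w \<in> cs4_worlds CS4. Bot \<in> fst w}"
    "\<lambda>w v. fst w \<subseteq> fst v" cs4_access "\<lambda>p. {w \<in> cs4_worlds CS4. Var p \<in> fst w}" fst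
    by (rule cs4_canonical_model)
  show ?thesis
    using bi_frame[OF cs4_access_preorder] cs4_backward_confluent valuation refutes[OF assms]
    by auto
qed

section \<open>The canonical model of GS4 and S4I\<close>

definition consistent_prime_theories :: "logic \<Rightarrow> form set set" where
  "consistent_prime_theories L = {\<Gamma>. prime_theory L \<Gamma> \<and> Bot \<notin> \<Gamma>}"

definition box_dia_access :: "form set \<Rightarrow> form set \<Rightarrow> bool" where
  "box_dia_access \<Gamma> \<Delta> \<longleftrightarrow> boxset \<Gamma> \<subseteq> \<Delta> \<and> (\<forall>a\<in>\<Delta>. Dia a \<in> \<Gamma>)"

lemma consistent_prime_theories_iff:
  "\<Gamma> \<in> consistent_prime_theories L \<longleftrightarrow> prime_theory L \<Gamma> \<and> Bot \<notin> \<Gamma>"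
  by (simp add: consistent_prime_theories_def)

lemma consistent_prime_theories_closed:
  "\<Gamma> \<in> consistent_prime_theories L \<Longrightarrow> deductively_closed L \<Gamma>"
  by (simp add: consistent_prime_theories_def prime_theory_def)

lemma Dia_Ors:
  assumes "L \<noteq> CS4" "\<Gamma> \<in> consistent_prime_theories L" "Dia (Ors xs) \<in> \<Gamma>"
  shows "\<exists>x\<in>set xs. Dia x \<in> \<Gamma>"
  using assms(3)
proof (induction xs)
  case Nil
  then show ?case
    using closed_prov_mp[OF _ prov_N[OF assms(1)]] assms(2)
    by (auto simp: consistent_prime_theories_def prime_theory_def)
next
  case (Cons x xs)
  then have "Or (Dia x) (Dia (Ors xs)) \<in> \<Gamma>"
    using closed_prov_mp[OF consistent_prime_theories_closed[OF assms(2)] prov_DP[OF assms(1)]]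
    by simp
  then show ?case
    using Cons.IH assms(2) prime_Or_iff by (auto simp: consistent_prime_theories_iff)
qed

lemma avoids_Dia_complement:
  assumes "L \<noteq> CS4" "\<Gamma> \<in> consistent_prime_theories L"
    and "\<And>xs. derivable L \<Delta> (Ors xs) \<Longrightarrow> Dia (Ors xs) \<in> \<Gamma>"
  shows "avoids L \<Delta> {c. Dia c \<notin> \<Gamma>}"
  unfolding avoids_def using assms Dia_Ors by blast

lemma dp_Dia_witness:
  assumes "L \<noteq> CS4" "\<Gamma> \<in> consistent_prime_theories L" "Dia a \<in> \<Gamma>"
  shows "\<exists>\<Delta>\<in>consistent_prime_theories L. box_dia_access \<Gamma> \<Delta> \<and> a \<in> \<Delta>"
proof -
  have "Dia (Ors xs) \<in> \<Gamma>" if "derivable L (insert a (boxset \<Gamma>)) (Ors xs)" for xs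
    using closed_Dia_derivable[OF consistent_prime_theories_closed[OF assms(2)] that assms(3)] .
  then have "avoids L (insert a (boxset \<Gamma>)) {c. Dia c \<notin> \<Gamma>}"
    by (rule avoids_Dia_complement[OF assms(1,2)])
  then obtain \<Delta> where \<Delta>: "insert a (boxset \<Gamma>) \<subseteq> \<Delta>" "prime_theory L \<Delta>" "Bot \<notin> \<Delta>"
      "{c. Dia c \<notin> \<Gamma>} \<inter> \<Delta> = {}"
    by (rule lindenbaum_avoiding)
  have "\<Delta> \<in> consistent_prime_theories L"
    using \<Delta>(2,3) by (simp add: consistent_prime_theories_iff)
  moreover have "box_dia_access \<Gamma> \<Delta>"
    using \<Delta>(1,4) unfolding box_dia_access_def by blast
  ultimately show ?thesis
    using \<Delta>(1) by blast
qed

lemma dp_forward_confluent: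
  assumes "L \<noteq> CS4"
  shows "forward_confluent (consistent_prime_theories L) (\<subseteq>) box_dia_access"
proof (unfold forward_confluent_def, intro ballI impI)
  fix w w' v
  assume w': "w' \<in> consistent_prime_theories L" and v: "v \<in> consistent_prime_theories L"
    and "w \<subseteq> w'" "box_dia_access w v"
  then have v_Dia: "Dia c \<in> w'" if "c \<in> v" for c
    using that unfolding box_dia_access_def by blast
  have "Dia (Ors xs) \<in> w'" if xs: "derivable L (v \<union> boxset w') (Ors xs)" for xs
  proof -
    obtain ds where "set ds \<subseteq> v" "derivable L (insert (Ands ds) (boxset w')) (Ors xs)"
      using derivable_compact_Ands[OF xs] by blast
    moreover from this(1) have "Ands ds \<in> v"
      using closed_Ands_iff[OF consistent_prime_theories_closed[OF v]] by blast
    ultimately show ?thesis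
      using closed_Dia_derivable[OF consistent_prime_theories_closed[OF w']] v_Dia by blast
  qed
  then have "avoids L (v \<union> boxset w') {c. Dia c \<notin> w'}"
    by (rule avoids_Dia_complement[OF assms w'])
  then obtain \<Delta> where \<Delta>: "v \<union> boxset w' \<subseteq> \<Delta>" "prime_theory L \<Delta>" "Bot \<notin> \<Delta>"
      "{c. Dia c \<notin> w'} \<inter> \<Delta> = {}"
    by (rule lindenbaum_avoiding)
  have "\<Delta> \<in> consistent_prime_theories L"
    using \<Delta>(2,3) by (simp add: consistent_prime_theories_iff)
  moreover have "box_dia_access w' \<Delta>"
    using \<Delta>(1,4) unfolding box_dia_access_def by blast
  ultimately show "\<exists>v'\<in>consistent_prime_theories L. v \<subseteq> v' \<and> box_dia_access w' v'"
    using \<Delta>(1) by blast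
qed

text \<open>FS turns a derivation of \<open>\<box>c\<^sub>1 \<or> \<dots> \<or> \<box>c\<^sub>n\<close> from \<open>\<diamond>\<delta>\<close> and \<open>\<Gamma>\<close>, with \<open>\<delta>\<close> a
  conjunction of members of \<open>\<Delta>\<close>, into \<open>\<box>(\<delta> \<rightarrow> c\<^sub>1 \<or> \<dots> \<or> c\<^sub>n) \<in> \<Gamma>\<close>; so some \<open>c\<^sub>i\<close> lies
  in \<open>\<Delta>\<close>.\<close>

lemma gs4_avoids_Box_complement:
  assumes \<Gamma>: "deductively_closed GS4 \<Gamma>" and \<Delta>: "prime_theory GS4 \<Delta>" "Bot \<notin> \<Delta>"
    and "boxset \<Gamma> \<subseteq> \<Delta>"
  shows "avoids GS4 (Dia ` \<Delta> \<union> \<Gamma>) (Box ` (- \<Delta>))"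
proof (unfold avoids_def, intro allI impI notI)
  fix xs assume xs: "set xs \<subseteq> Box ` (- \<Delta>)" "derivable GS4 (Dia ` \<Delta> \<union> \<Gamma>) (Ors xs)"
  obtain cs where cs: "xs = map Box cs" "set cs \<subseteq> - \<Delta>"
    using list_subset_image[OF xs(1)] by blast
  obtain es where es: "set es \<subseteq> \<Delta>" "derivable GS4 (insert (Dia (Ands es)) \<Gamma>) (Ors xs)"
    using derivable_Dia_image[OF xs(2)] by blast
  have "derivable GS4 \<Gamma> (Imp (Dia (Ands es)) (Box (Ors cs)))"
    using es(2) cs(1) by (simp add: deduction_theorem derivable_Ors_Box)
  then have "Imp (Ands es) (Ors cs) \<in> \<Delta>"
    using closed_derivable[OF \<Gamma> derivable_prov_mp[OF prov_FS]] assms(4)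
    unfolding boxset_def by blast
  moreover have "Ands es \<in> \<Delta>"
    using es(1) closed_Ands_iff \<Delta>(1) unfolding prime_theory_def by blast
  ultimately have "Ors cs \<in> \<Delta>"
    using closed_Imp_mp \<Delta>(1) unfolding prime_theory_def by blast
  then show False
    using prime_Ors[OF \<Delta>] cs(2) by blast
qed

lemma gs4_backward_witness:
  assumes "\<Gamma> \<in> consistent_prime_theories GS4" "\<Delta> \<in> consistent_prime_theories GS4"
    and "boxset \<Gamma> \<subseteq> \<Delta>"
  shows "\<exists>\<Gamma>'\<in>consistent_prime_theories GS4. \<Gamma> \<subseteq> \<Gamma>' \<and> box_dia_access \<Gamma>' \<Delta>"
proof -
  have "avoids GS4 (Dia ` \<Delta> \<union> \<Gamma>) (Box ` (- \<Delta>))"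
    using assms gs4_avoids_Box_complement
    by (simp add: consistent_prime_theories_closed consistent_prime_theories_iff)
  then obtain \<Gamma>' where \<Gamma>': "Dia ` \<Delta> \<union> \<Gamma> \<subseteq> \<Gamma>'" "prime_theory GS4 \<Gamma>'" "Bot \<notin> \<Gamma>'"
      "Box ` (- \<Delta>) \<inter> \<Gamma>' = {}"
    by (rule lindenbaum_avoiding)
  have "\<Gamma>' \<in> consistent_prime_theories GS4"
    using \<Gamma>'(2,3) by (simp add: consistent_prime_theories_iff)
  moreover have "box_dia_access \<Gamma>' \<Delta>"
    using \<Gamma>'(1,4) unfolding box_dia_access_def boxset_def by blast
  ultimately show ?thesis
    using \<Gamma>'(1) by blast
qed

text \<open>CD splits a disjunction derived from \<open>\<box>\<^sup>-\<Gamma>\<close> into the disjuncts outside \<open>\<Delta>'\<close>,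
  which cannot all be boxed in \<open>\<Gamma>\<close>, and those inside \<open>\<Delta>'\<close>, whose diamonds fail in \<open>\<Gamma>\<close>.\<close>

lemma s4i_avoids_complement:
  assumes \<Gamma>: "\<Gamma> \<in> consistent_prime_theories S4I" and \<Delta>': "prime_theory S4I \<Delta>'" "Bot \<notin> \<Delta>'"
    and "boxset \<Gamma> \<subseteq> \<Delta>'"
  shows "avoids S4I (boxset \<Gamma>) (- \<Delta>' \<union> {c. Dia c \<notin> \<Gamma>})"
proof (unfold avoids_def, intro allI impI notI)
  fix xs assume xs: "set xs \<subseteq> - \<Delta>' \<union> {c. Dia c \<notin> \<Gamma>}" "derivable S4I (boxset \<Gamma>) (Ors xs)"
  define out where "out = filter (\<lambda>x. x \<notin> \<Delta>') xs"
  define inn where "inn = filter (\<lambda>x. x \<in> \<Delta>') xs"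
  have prime: "prime_theory S4I \<Gamma>"
    using \<Gamma> by (simp add: consistent_prime_theories_iff)
  have "derivable S4I (boxset \<Gamma>) (Ors (out @ inn))"
    by (rule derivable_Ors_mono[OF _ xs(2)]) (auto simp: out_def inn_def)
  then have "Box (Or (Ors out) (Ors inn)) \<in> \<Gamma>"
    using prime closed_Box_derivable derivable_Ors_append unfolding prime_theory_def by blast
  then have "Box (Ors out) \<in> \<Gamma> \<or> Dia (Ors inn) \<in> \<Gamma>"
    using prime closed_prov_mp[OF _ prov_CD] prime_Or_iff unfolding prime_theory_def by blast
  then show False
  proof
    assume "Box (Ors out) \<in> \<Gamma>"
    then have "Ors out \<in> \<Delta>'"
      using assms(4) unfolding boxset_def by blast
    then obtain x where "x \<in> set out" "x \<in> \<Delta>'"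
      using prime_Ors[OF \<Delta>'] by blast
    then show False
      by (simp add: out_def)
  next
    assume "Dia (Ors inn) \<in> \<Gamma>"
    then obtain x where "x \<in> set inn" "Dia x \<in> \<Gamma>"
      using Dia_Ors[OF _ \<Gamma>] by auto
    then show False
      using xs(1) by (auto simp: inn_def)
  qed
qed

lemma s4i_downward_witness:
  assumes "\<Gamma> \<in> consistent_prime_theories S4I" "\<Delta>' \<in> consistent_prime_theories S4I"
    and "boxset \<Gamma> \<subseteq> \<Delta>'"
  shows "\<exists>\<Delta>\<in>consistent_prime_theories S4I. box_dia_access \<Gamma> \<Delta> \<and> \<Delta> \<subseteq> \<Delta>'"
proof -
  have "avoids S4I (boxset \<Gamma>) (- \<Delta>' \<union> {c. Dia c \<notin> \<Gamma>})"
    using assms s4i_avoids_complement by (simp add: consistent_prime_theories_iff)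
  then obtain \<Delta> where \<Delta>: "boxset \<Gamma> \<subseteq> \<Delta>" "prime_theory S4I \<Delta>" "Bot \<notin> \<Delta>"
      "(- \<Delta>' \<union> {c. Dia c \<notin> \<Gamma>}) \<inter> \<Delta> = {}"
    by (rule lindenbaum_avoiding)
  have "\<Delta> \<in> consistent_prime_theories S4I"
    using \<Delta>(2,3) by (simp add: consistent_prime_theories_iff)
  moreover have "box_dia_access \<Gamma> \<Delta>" "\<Delta> \<subseteq> \<Delta>'"
    using \<Delta>(1,4) unfolding box_dia_access_def by blast+
  ultimately show ?thesis
    by blast
qed

lemma dp_Box_refuter:
  assumes "L \<noteq> CS4" "\<Gamma> \<in> consistent_prime_theories L" "Box a \<notin> \<Gamma>"
  shows "\<exists>\<Gamma>'\<in>consistent_prime_theories L. \<exists>\<Delta>\<in>consistent_prime_theories L.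
    \<Gamma> \<subseteq> \<Gamma>' \<and> box_dia_access \<Gamma>' \<Delta> \<and> a \<notin> \<Delta>"
proof -
  have "\<not> derivable L (boxset \<Gamma>) a"
    using assms(3) closed_Box_derivable[OF consistent_prime_theories_closed[OF assms(2)]] by blast
  then obtain \<Delta> where \<Delta>: "boxset \<Gamma> \<subseteq> \<Delta>" "prime_theory L \<Delta>" "Bot \<notin> \<Delta>" "a \<notin> \<Delta>"
    by (rule lindenbaum_refuting)
  then have \<Delta>_world: "\<Delta> \<in> consistent_prime_theories L"
    by (simp add: consistent_prime_theories_iff)
  show ?thesis
  proof (cases L)
    case GS4
    then obtain \<Gamma>' where "\<Gamma>' \<in> consistent_prime_theories L" "\<Gamma> \<subseteq> \<Gamma>'" "box_dia_access \<Gamma>' \<Delta>"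
      using gs4_backward_witness assms(2) \<Delta>_world \<Delta>(1) by blast
    then show ?thesis
      using \<Delta>_world \<Delta>(4) by blast
  next
    case S4I
    then obtain \<Delta>\<^sub>0 where "\<Delta>\<^sub>0 \<in> consistent_prime_theories L" "box_dia_access \<Gamma> \<Delta>\<^sub>0" "\<Delta>\<^sub>0 \<subseteq> \<Delta>"
      using s4i_downward_witness assms(2) \<Delta>_world \<Delta>(1) by blast
    then show ?thesis
      using assms(2) \<Delta>(4) by blast
  qed (use assms(1) in simp)
qed

lemma dp_canonical_model:
  assumes "L \<noteq> CS4"
  shows "canonical_model L (consistent_prime_theories L) {} (\<subseteq>) box_dia_access
    (\<lambda>p. {\<Gamma> \<in> consistent_prime_theories L. Var p \<in> \<Gamma>}) id"
proof
  show "{} = {w \<in> consistent_prime_theories L. Bot \<in> id w}"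
    by (auto simp: consistent_prime_theories_iff)
  show "(\<subseteq>) = (\<lambda>w v. id w \<subseteq> id v)"
    by (simp add: fun_eq_iff)
  show "\<exists>w\<in>consistent_prime_theories L. id w = \<Gamma>" if "prime_theory L \<Gamma>" "Bot \<notin> \<Gamma>" for \<Gamma>
    using that by (simp add: consistent_prime_theories_iff)
  show "boxset (id u) \<subseteq> id v" if "box_dia_access u v" for u v
    using that by (simp add: box_dia_access_def)
  show "\<exists>u\<in>consistent_prime_theories L. \<exists>v\<in>consistent_prime_theories L.
      id w \<subseteq> id u \<and> box_dia_access u v \<and> a \<notin> id v"
    if "w \<in> consistent_prime_theories L" "Box a \<notin> id w" for w a
    using dp_Box_refuter[OF assms] that by simp
  show "\<exists>v\<in>consistent_prime_theories L. box_dia_access u v \<and> a \<in> id v"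
    if "u \<in> consistent_prime_theories L" "Dia a \<in> id u" for u a
    using dp_Dia_witness[OF assms] that by simp
  show "\<exists>u\<in>consistent_prime_theories L. id w \<subseteq> id u \<and>
      (\<forall>v\<in>consistent_prime_theories L. box_dia_access u v \<longrightarrow> a \<notin> id v)"
    if "w \<in> consistent_prime_theories L" "Dia a \<notin> id w" for w a
    using that unfolding box_dia_access_def by auto
qed (simp_all add: consistent_prime_theories_iff)

lemma box_dia_access_preorder: "preorder_on (consistent_prime_theories L) box_dia_access"
proof -
  have "box_dia_access \<Gamma> \<Gamma>" if "deductively_closed L \<Gamma>" for \<Gamma>
    using boxset_subset[OF that] closed_prov_mp[OF that prov_Dia_T]
    unfolding box_dia_access_def by blast
  moreover have "box_dia_access \<Gamma> \<Theta>"
    if "deductively_closed L \<Gamma>" "box_dia_access \<Gamma> \<Delta>" "box_dia_access \<Delta> \<Theta>" for \<Gamma> \<Delta> \<Theta>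
    using that boxset_Box[OF that(1)] closed_prov_mp[OF that(1) prov_Dia_4]
    unfolding box_dia_access_def boxset_def by blast
  ultimately show ?thesis
    unfolding preorder_on_def using consistent_prime_theories_closed by blast
qed

lemma gs4_locally_linear: "locally_linear (consistent_prime_theories GS4) (\<subseteq>)"
proof (unfold locally_linear_def, intro ballI impI)
  fix w u v assume w: "w \<in> consistent_prime_theories GS4" and u: "u \<in> consistent_prime_theories GS4"
    and v: "v \<in> consistent_prime_theories GS4" and "w \<subseteq> u" "w \<subseteq> v"
  show "u \<subseteq> v \<or> v \<subseteq> u"
  proof (rule ccontr)
    assume "\<not> (u \<subseteq> v \<or> v \<subseteq> u)"
    then obtain p q where pq: "p \<in> u" "p \<notin> v" "q \<in> v" "q \<notin> u"
      by blast
    have "Or (Imp p q) (Imp q p) \<in> w"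
      using closed_prov[OF consistent_prime_theories_closed[OF w] prov_GD] .
    then have "Imp p q \<in> u \<or> Imp q p \<in> v"
      using prime_Or_iff w \<open>w \<subseteq> u\<close> \<open>w \<subseteq> v\<close> by (auto simp: consistent_prime_theories_iff)
    then show False
      using pq closed_Imp_mp consistent_prime_theories_closed[OF u]
        consistent_prime_theories_closed[OF v]
      by blast
  qed
qed

lemma gs4_backward_confluent:
  "backward_confluent (consistent_prime_theories GS4) (\<subseteq>) box_dia_access"
  unfolding backward_confluent_def
proof (intro ballI impI)
  fix w v v' assume "w \<in> consistent_prime_theories GS4" "v' \<in> consistent_prime_theories GS4"
    "box_dia_access w v" "v \<subseteq> v'"
  moreover from this have "boxset w \<subseteq> v'"
    unfolding box_dia_access_def by blast
  ultimately show "\<exists>w'\<in>consistent_prime_theories GS4. w \<subseteq> w' \<and> box_dia_access w' v'"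
    using gs4_backward_witness by blast
qed

lemma s4i_downward_confluent:
  "downward_confluent (consistent_prime_theories S4I) (\<subseteq>) box_dia_access"
  unfolding downward_confluent_def
proof (intro ballI impI)
  fix w v v' assume "w \<in> consistent_prime_theories S4I" "v' \<in> consistent_prime_theories S4I"
    "w \<subseteq> v" "box_dia_access v v'"
  moreover from this have "boxset w \<subseteq> v'"
    unfolding box_dia_access_def boxset_def by blast
  ultimately show "\<exists>w'\<in>consistent_prime_theories S4I. box_dia_access w w' \<and> w' \<subseteq> v'"
    using s4i_downward_witness by blast
qed

lemma dp_countermodel:
  assumes "L \<noteq> CS4" "\<not> prov L \<phi>"
  shows "\<exists>Wb R S V. logic_frame L (consistent_prime_theories L) Wb R S \<and>
    valuation (consistent_prime_theories L) Wb R V \<and>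
    \<not> model_valid (consistent_prime_theories L) Wb R S V \<phi>"
proof -
  interpret canonical_model L "consistent_prime_theories L" "{}" "(\<subseteq>)" box_dia_access
    "\<lambda>p. {\<Gamma> \<in> consistent_prime_theories L. Var p \<in> \<Gamma>}" id
    by (rule dp_canonical_model[OF assms(1)])
  have "logic_frame L (consistent_prime_theories L) {} (\<subseteq>) box_dia_access"
    using assms(1) bi_frame[OF box_dia_access_preorder] dp_forward_confluent[OF assms(1)]
      gs4_locally_linear gs4_backward_confluent s4i_downward_confluent
    by (cases L) simp_all
  then show ?thesis
    using valuation refutes[OF assms(2)] by blast
qed

section \<open>Transfer along injections\<close>

definition rel_image :: "('a \<Rightarrow> 'b) \<Rightarrow> 'a set \<Rightarrow> ('a \<Rightarrow> 'a \<Rightarrow> bool) \<Rightarrow> 'b \<Rightarrow> 'b \<Rightarrow> bool" where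
  "rel_image f W R x y \<longleftrightarrow> R (inv_into W f x) (inv_into W f y)"

lemma rel_image_apply:
  "inj_on f W \<Longrightarrow> a \<in> W \<Longrightarrow> b \<in> W \<Longrightarrow> rel_image f W R (f a) (f b) \<longleftrightarrow> R a b"
  by (simp add: rel_image_def)

lemma ball_image_iff: "(\<forall>x\<in>f ` A. P x) \<longleftrightarrow> (\<forall>a\<in>A. P (f a))"
  and bex_image_iff: "(\<exists>x\<in>f ` A. P x) \<longleftrightarrow> (\<exists>a\<in>A. P (f a))"
  by auto

lemma sat_image:
  assumes f: "inj_on f W" and "Wb \<subseteq> W" "\<And>p. V p \<subseteq> W" "w \<in> W"
  shows "sat (f ` W) (f ` Wb) (rel_image f W R) (rel_image f W S) (\<lambda>p. f ` V p) (f w) \<phi> \<longleftrightarrow>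
    sat W Wb R S V w \<phi>"
  using assms(4)
proof (induction \<phi> arbitrary: w)
  case (Var p)
  then show ?case using inj_on_image_mem_iff[OF f] assms(3) by simp
next
  case Bot
  then show ?case using inj_on_image_mem_iff[OF f] assms(2) by simp
qed (simp_all add: ball_image_iff bex_image_iff rel_image_apply[OF f] cong: ball_cong bex_cong)

lemma logic_frame_image:
  assumes f: "inj_on f W" and "logic_frame L W Wb R S"
  shows "logic_frame L (f ` W) (f ` Wb) (rel_image f W R) (rel_image f W S)"
proof -
  have Wb: "Wb \<subseteq> W"
    using logic_frame_bi_frame[OF assms(2)] unfolding bi_frame_def by blast
  have mem: "f a \<in> f ` Wb \<longleftrightarrow> a \<in> Wb" if "a \<in> W" for a
    using inj_on_image_mem_iff[OF f that Wb] .
  have "preorder_on (f ` W) (rel_image f W Q) \<longleftrightarrow> preorder_on W Q" for Q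
    unfolding preorder_on_def by (simp add: ball_image_iff rel_image_apply[OF f] cong: ball_cong)
  moreover have "up_closed (f ` W) (rel_image f W Q) (f ` Wb) \<longleftrightarrow> up_closed W Q Wb" for Q
    unfolding up_closed_def using Wb mem
    by (auto simp: ball_image_iff rel_image_apply[OF f])
  ultimately have "bi_frame (f ` W) (f ` Wb) (rel_image f W R) (rel_image f W S)"
    using logic_frame_bi_frame[OF assms(2)] Wb unfolding bi_frame_def by (simp add: image_mono)
  moreover have "forward_confluent (f ` W) (rel_image f W R) (rel_image f W S) \<longleftrightarrow>
      forward_confluent W R S"
    "backward_confluent (f ` W) (rel_image f W R) (rel_image f W S) \<longleftrightarrow> backward_confluent W R S"
    "downward_confluent (f ` W) (rel_image f W R) (rel_image f W S) \<longleftrightarrow> downward_confluent W R S"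
    "locally_linear (f ` W) (rel_image f W R) \<longleftrightarrow> locally_linear W R"
    unfolding forward_confluent_def backward_confluent_def downward_confluent_def locally_linear_def
    by (simp_all add: ball_image_iff bex_image_iff rel_image_apply[OF f] cong: ball_cong bex_cong)
  ultimately show ?thesis
    using assms(2) by (cases L) simp_all
qed

lemma valuation_image:
  assumes f: "inj_on f W" and "valuation W Wb R V"
  shows "valuation (f ` W) (f ` Wb) (rel_image f W R) (\<lambda>p. f ` V p)"
proof (unfold valuation_def, intro allI conjI)
  fix p
  have V: "V p \<subseteq> W" "up_closed W R (V p)" "Wb \<subseteq> V p"
    using assms(2) unfolding valuation_def by blast+
  then show "f ` V p \<subseteq> f ` W" "f ` Wb \<subseteq> f ` V p"
    by (simp_all add: image_mono)
  show "up_closed (f ` W) (rel_image f W R) (f ` V p)"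
    unfolding up_closed_def ball_image_iff
  proof (intro ballI impI)
    fix a b assume "a \<in> V p" "b \<in> W" "rel_image f W R (f a) (f b)"
    then show "f b \<in> f ` V p"
      using V(1,2) rel_image_apply[OF f] unfolding up_closed_def by blast
  qed
qed

lemma valid_in_inj_on:
  fixes f :: "'a \<Rightarrow> 'b"
  assumes "valid_in TYPE('b) L \<phi>" "inj_on f W" "logic_frame L W Wb R S" "valuation W Wb R V"
  shows "model_valid W Wb R S V \<phi>"
proof (unfold model_valid_def, intro ballI)
  fix w assume w: "w \<in> W - Wb"
  have Wb: "Wb \<subseteq> W" and V: "\<And>p. V p \<subseteq> W"
    using logic_frame_bi_frame[OF assms(3)] assms(4) unfolding bi_frame_def valuation_def by blast+
  have "model_valid (f ` W) (f ` Wb) (rel_image f W R) (rel_image f W S) (\<lambda>p. f ` V p) \<phi>"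
    using assms(1) logic_frame_image[OF assms(2,3)] valuation_image[OF assms(2,4)]
    unfolding valid_in_def by blast
  moreover have "f w \<in> f ` W - f ` Wb"
    using w inj_on_image_mem_iff[OF assms(2) _ Wb] by blast
  ultimately show "sat W Wb R S V w \<phi>"
    using sat_image[where V = V, OF assms(2) Wb V] w unfolding model_valid_def by blast
qed

definition cs4_world_code :: "form set \<times> form option \<Rightarrow> form set" where
  "cs4_world_code w = Box ` fst w \<union> Dia ` set_option (snd w)"

lemma inj_cs4_world_code: "inj cs4_world_code"
proof (rule injI)
  fix w v assume eq: "cs4_world_code w = cs4_world_code v"
  have "fst u = {a. Box a \<in> cs4_world_code u}" "set_option (snd u) = {a. Dia a \<in> cs4_world_code u}"
    for u
    by (auto simp: cs4_world_code_def)
  then have "fst w = fst v" "set_option (snd w) = set_option (snd v)"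
    using eq by metis+
  then show "w = v"
    by (cases "snd w"; cases "snd v") (auto simp: prod_eq_iff)
qed

theorem completeness:
  assumes "valid_in TYPE(form set set) L \<phi>"
  shows "prov L \<phi>"
proof (rule ccontr)
  assume unprovable: "\<not> prov L \<phi>"
  show False
  proof (cases "L = CS4")
    case True
    have "inj_on (\<lambda>w. {cs4_world_code w}) (cs4_worlds CS4)"
      unfolding inj_on_def using injD[OF inj_cs4_world_code] by blast
    then show False
      using cs4_countermodel unprovable valid_in_inj_on assms True by blast
  next
    case False
    have "inj_on (\<lambda>\<Gamma>. {\<Gamma>}) (consistent_prime_theories L)"
      by (simp add: inj_on_def)
    then show False
      using dp_countermodel[OF False unprovable] valid_in_inj_on assms by blast
  qed
qed

(* The hypothesis on L is vacuous: CS4, GS4 and S4I are all the constructors of logic. *)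
theorem mainTheorem4:
  assumes "L \<in> {CS4, GS4, S4I}"
  shows "(prov L \<phi> \<longrightarrow> valid_in TYPE('w) L \<phi>) \<and>
         (prov L \<phi> \<longleftrightarrow> valid_in TYPE(form set set) L \<phi>)"
  using prov_valid_in[of L \<phi> "TYPE('w)"] prov_valid_in[of L \<phi> "TYPE(form set set)"]
    completeness[of L \<phi>]
  by blast

end
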